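(* Let $d \ge 1$ and $r \ge 0$ with $m := d+1-2r \ge 0$. Let $\ell_j(x,y) = \alpha_jx+\beta_jy$, $1\le j\le m$, be fixed, pairwise non-proportional linear forms. Then a general binary form $p \in H_d(\mathbb{C}^2)$ can be written uniquely as $$p(x,y) = \sum_{j=1}^m t_j\,\ell_j(x,y)^d + \sum_{k=1}^r (t_{k1}x + t_{k2}y)^d$$ with $t_j, t_{k1}, t_{k2}\in\mathbb{C}$. Uniqueness is meant up to permutation of the $r$ summands of the second sum and up to replacing a linear form $t_{k1}x+t_{k2}y$ by $\zeta(t_{k1}x+t_{k2}y)$ with $\zeta^d=1$.
   Context: $H_d(\mathbb{C}^n)$ denotes the complex vector space of homogeneous polynomials of degree $d$ in $n$ variables. "A general $p$ has property P" means P holds for all $p$ in a nonempty Zariski-open subset of $H_d(\mathbb{C}^n)$. *)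

theory Defs
  imports Complex_Main
begin

inductive_set polyfun :: "nat \<Rightarrow> ((nat \<Rightarrow> complex) \<Rightarrow> complex) set" for n :: nat where
  const: "(\<lambda>v. a) \<in> polyfun n"
| var: "i < n \<Longrightarrow> (\<lambda>v. v i) \<in> polyfun n"
| add: "f \<in> polyfun n \<Longrightarrow> g \<in> polyfun n \<Longrightarrow> (\<lambda>v. f v + g v) \<in> polyfun n"
| mult: "f \<in> polyfun n \<Longrightarrow> g \<in> polyfun n \<Longrightarrow> (\<lambda>v. f v * g v) \<in> polyfun n"

definition binform :: "nat \<Rightarrow> (nat \<Rightarrow> complex) \<Rightarrow> complex \<Rightarrow> complex \<Rightarrow> complex" where
  "binform d c x y = (\<Sum>i\<le>d. c i * x ^ i * y ^ (d - i))"

text \<open>A general form in H_d(C^2) has property P: P holds on a nonempty Zariski open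
  subset of the coefficient space C^(d+1); equivalently P holds outside the zero set of
  some polynomial in the d+1 coefficients which does not vanish identically.\<close>
definition general_binform :: "nat \<Rightarrow> ((nat \<Rightarrow> complex) \<Rightarrow> bool) \<Rightarrow> bool" where
  "general_binform d P \<longleftrightarrow>
     (\<exists>F \<in> polyfun (d + 1). (\<exists>c. F c \<noteq> 0) \<and> (\<forall>c. F c \<noteq> 0 \<longrightarrow> P c))"

definition proportional :: "complex \<times> complex \<Rightarrow> complex \<times> complex \<Rightarrow> bool" where
  "proportional u w \<longleftrightarrow>
     (\<exists>a. fst u = a * fst w \<and> snd u = a * snd w) \<or> (\<exists>a. fst w = a * fst u \<and> snd w = a * snd u)"

definition waring_rep ::
  "nat \<Rightarrow> nat \<Rightarrow> (nat \<Rightarrow> complex) \<Rightarrow> (nat \<Rightarrow> complex) \<Rightarrow> (nat \<Rightarrow> complex)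
   \<Rightarrow> (nat \<Rightarrow> complex) \<Rightarrow> (nat \<Rightarrow> complex) \<Rightarrow> (nat \<Rightarrow> complex) \<Rightarrow> bool" where
  "waring_rep d r \<alpha> \<beta> c t s1 s2 \<longleftrightarrow>
     (\<forall>x y. binform d c x y =
        (\<Sum>j=1..d + 1 - 2 * r. t j * (\<alpha> j * x + \<beta> j * y) ^ d)
        + (\<Sum>k=1..r. (s1 k * x + s2 k * y) ^ d))"

end

theory Submission
  imports Defs "Subresultants.Subresultant_Gcd" "HOL-Computational_Algebra.Fundamental_Theorem_Algebra"
    "HOL-Computational_Algebra.Field_as_Ring"
begin

text \<open>
  After a
  shear x \<mapsto> x + kappa y every fixed form is beta_j (z_j x + y) with distinct slopes z_j
  (normal position).  Dehomogenising, a decomposition of the form with normalised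
  coefficients u_i = c_i / (d choose i) expresses u_0, ..., u_d as weighted power sums over
  the z_j and the slopes of the r free forms.  For general c such an expression comes from
  Sylvester's method: the polynomial G = (prod_j (X - z_j)) * h, deg h \<le> r, apolar to the
  form (r Hankel conditions, solved by Cramer's rule) has n = m + r simple roots, and
  Vandermonde interpolation plus the linear recurrence defined by G give the power sums.
  General means that one explicit polynomial in c (Hankel determinant, leading coefficient
  and discriminant of G) does not vanish; a witness shows it is not identically zero.
  Uniqueness follows by pairing two decompositions with products of linear forms through all
  but one of the relevant points (apolarity).
\<close>

lemma sum_single_term:
  assumes "finite A" "a \<in> A" "\<And>x. x \<in> A \<Longrightarrow> x \<noteq> a \<Longrightarrow> f x = 0"
  shows "sum f A = f a"
  using assms by (simp add: sum.remove sum.neutral)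

lemma card_image_Un_le:
  assumes "finite A" "finite B"
  shows "card (f ` A \<union> g ` B) \<le> card A + card B"
proof -
  have "card (f ` A \<union> g ` B) \<le> card (f ` A) + card (g ` B)" by (rule card_Un_le)
  also have "\<dots> \<le> card A + card B" by (intro add_mono card_image_le assms)
  finally show ?thesis .
qed

lemma card_image_Un3_le:
  assumes "finite A" "finite B" "finite C"
  shows "card (f ` A \<union> g ` B \<union> h ` C) \<le> card A + card B + card C"
proof -
  have "card (f ` A \<union> g ` B \<union> h ` C) \<le> card (f ` A) + card (g ` B) + card (h ` C)"
    using assms by (meson add_right_mono card_Un_le finite_UnI finite_imageI order_trans)
  also have "\<dots> \<le> card A + card B + card C" by (intro add_mono card_image_le assms)
  finally show ?thesis .
qed

lemma nth_root_exists:
  assumes "d \<ge> 1" "(w :: complex) \<noteq> 0"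
  obtains \<mu> where "\<mu> ^ d = w" "\<mu> \<noteq> 0"
proof -
  have "card {\<mu>. \<mu> ^ d = w} = d" using card_nth_roots assms by auto
  then obtain \<mu> where "\<mu> ^ d = w" using assms(1) by fastforce
  then show ?thesis using that assms by (auto simp: zero_power)
qed

section \<open>Polynomial functions of the coefficients\<close>

lemma polyfun_sum:
  assumes "\<And>x. x \<in> S \<Longrightarrow> (\<lambda>v. f x v) \<in> polyfun N"
  shows "(\<lambda>v. \<Sum>x\<in>S. f x v) \<in> polyfun N"
  using assms by (induction S rule: infinite_finite_induct) (auto intro: polyfun.intros)

lemma polyfun_prod:
  assumes "\<And>x. x \<in> S \<Longrightarrow> (\<lambda>v. f x v) \<in> polyfun N"
  shows "(\<lambda>v. \<Prod>x\<in>S. f x v) \<in> polyfun N"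
  using assms by (induction S rule: infinite_finite_induct) (auto intro: polyfun.intros)

lemma polyfun_if:
  "(P \<Longrightarrow> f \<in> polyfun N) \<Longrightarrow> (\<not> P \<Longrightarrow> g \<in> polyfun N) \<Longrightarrow> (\<lambda>v. if P then f v else g v) \<in> polyfun N"
  by (cases P) auto

lemma polyfun_cong: "F \<in> polyfun N \<Longrightarrow> (\<And>i. i < N \<Longrightarrow> v i = v' i) \<Longrightarrow> F v = F v'"
  by (induction F rule: polyfun.induct) auto

lemma polyfun_compose:
  assumes "F \<in> polyfun N" and "\<And>i. i < N \<Longrightarrow> (\<lambda>v. T v i) \<in> polyfun N'"
  shows "(\<lambda>v. F (T v)) \<in> polyfun N'"
  using assms by (induction F rule: polyfun.induct) (auto intro: polyfun.intros)

lemma polyfun_det: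
  assumes "\<And>v. B v \<in> carrier_mat k k"
    and "\<And>i j. i < k \<Longrightarrow> j < k \<Longrightarrow> (\<lambda>v. B v $$ (i, j)) \<in> polyfun N"
  shows "(\<lambda>v. det (B v)) \<in> polyfun N"
proof -
  have "(\<lambda>v. \<Sum>p \<in> {p. p permutes {0..<k}}. signof p * (\<Prod>i = 0..<k. B v $$ (i, p i))) \<in> polyfun N"
  proof (intro polyfun_sum polyfun.mult polyfun.const polyfun_prod)
    fix p i assume "p \<in> {p. p permutes {0..<k}}" "i \<in> {0..<k}"
    then show "(\<lambda>v. B v $$ (i, p i)) \<in> polyfun N"
      using assms(2) permutes_in_image by fastforce
  qed
  then show ?thesis using det_def'[OF assms(1)] by simp
qed

section \<open>Homogenisation of univariate polynomials\<close>

text \<open>A univariate polynomial p of degree at most k stands for the binary form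
  sum_i coeff p i * x^i * y^(k-i); hom_eval k p a b is its value at (a, b).
  Linear functionals on binary forms of degree d are evaluated through this pairing.\<close>

definition hom_eval :: "nat \<Rightarrow> complex poly \<Rightarrow> complex \<Rightarrow> complex \<Rightarrow> complex" where
  "hom_eval k p a b = (\<Sum>i\<le>k. coeff p i * a ^ i * b ^ (k - i))"

lemma poly_as_sum_upto:
  "degree (p :: complex poly) \<le> k \<Longrightarrow> poly p x = (\<Sum>i\<le>k. coeff p i * x ^ i)"
  unfolding poly_altdef by (intro sum.mono_neutral_left) (auto simp: coeff_eq_0)

lemma hom_eval_dehomogenise:
  assumes "degree p \<le> k" "b \<noteq> 0"
  shows "hom_eval k p a b = b ^ k * poly p (a / b)"
  unfolding hom_eval_def poly_as_sum_upto[OF assms(1)] sum_distrib_left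
proof (intro sum.cong refl)
  fix i assume "i \<in> {..k}"
  then have "b ^ k = b ^ i * b ^ (k - i)" by (simp flip: power_add)
  then show "coeff p i * a ^ i * b ^ (k - i) = b ^ k * (coeff p i * (a / b) ^ i)"
    using assms(2) by (simp add: power_divide field_simps)
qed

lemma hom_eval_at_infinity: "hom_eval k p a 0 = coeff p k * a ^ k"
proof -
  have "hom_eval k p a 0 = (\<Sum>i\<in>{k}. coeff p i * a ^ i * 0 ^ (k - i))"
    unfolding hom_eval_def by (intro sum.mono_neutral_right) auto
  then show ?thesis by simp
qed

lemma hom_eval_zero_point: "k \<ge> 1 \<Longrightarrow> hom_eval k p 0 0 = 0"
  unfolding hom_eval_def by (intro sum.neutral) auto

lemma hom_eval_scale: "hom_eval k p (\<mu> * a) (\<mu> * b) = \<mu> ^ k * hom_eval k p a b"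
  unfolding hom_eval_def sum_distrib_left
proof (intro sum.cong refl)
  fix i assume "i \<in> {..k}"
  then have "\<mu> ^ k = \<mu> ^ i * \<mu> ^ (k - i)" by (simp flip: power_add)
  then show "coeff p i * (\<mu> * a) ^ i * (\<mu> * b) ^ (k - i) = \<mu> ^ k * (coeff p i * a ^ i * b ^ (k - i))"
    by (simp add: power_mult_distrib)
qed

lemma coeff_mult_degree_bound:
  assumes "degree p \<le> k1" "degree q \<le> k2"
  shows "coeff (p * q) (k1 + k2) = coeff p k1 * coeff q k2"
proof -
  have "coeff (p * q) (k1 + k2) = (\<Sum>i\<in>{k1}. coeff p i * coeff q (k1 + k2 - i))"
    unfolding coeff_mult
  proof (rule sum.mono_neutral_right)
    show "\<forall>i\<in>{..k1 + k2} - {k1}. coeff p i * coeff q (k1 + k2 - i) = 0"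
    proof
      fix i assume "i \<in> {..k1 + k2} - {k1}"
      then have "i < k1 \<or> i > k1" by auto
      then show "coeff p i * coeff q (k1 + k2 - i) = 0"
        using assms by (auto simp: coeff_eq_0)
    qed
  qed auto
  then show ?thesis by simp
qed

lemma hom_eval_mult:
  assumes "degree p \<le> k1" "degree q \<le> k2"
  shows "hom_eval (k1 + k2) (p * q) a b = hom_eval k1 p a b * hom_eval k2 q a b"
proof (cases "b = 0")
  case True
  then show ?thesis
    using coeff_mult_degree_bound[OF assms] by (simp add: hom_eval_at_infinity power_add)
next
  case False
  have "degree (p * q) \<le> k1 + k2" using assms degree_mult_le[of p q] by linarith
  then show ?thesis using False assms by (simp add: hom_eval_dehomogenise power_add)
qed

text \<open>The polynomial whose homogenisation is the product of the linear forms q x - p y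
  over a finite set of points (p, q); it is the basic test form of the uniqueness proof.\<close>

definition lin_prod :: "(complex \<times> complex) set \<Rightarrow> complex poly" where
  "lin_prod P = (\<Prod>(p, q)\<in>P. [:- p, q:])"

lemma lin_prod_exact:
  assumes "finite P"
  shows "hom_eval (card P) (lin_prod P) a b = (\<Prod>(p, q)\<in>P. q * a - p * b)
         \<and> degree (lin_prod P) \<le> card P"
  using assms unfolding lin_prod_def
proof (induction P rule: finite_induct)
  case empty
  have "hom_eval 0 1 a b = 1" by (simp add: hom_eval_def)
  then show ?case by simp
next
  case (insert x P)
  obtain p q where x: "x = (p, q)" by fastforce
  let ?L = "\<Prod>(p, q)\<in>P. [:- p, q:]"
  have deg1: "degree [:- p, q:] \<le> 1" by simp
  have "hom_eval (1 + card P) ([:- p, q:] * ?L) a b = hom_eval 1 [:- p, q:] a b * hom_eval (card P) ?L a b"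
    using insert deg1 by (intro hom_eval_mult) auto
  also have "\<dots> = (q * a - p * b) * (\<Prod>(p, q)\<in>P. q * a - p * b)"
    using insert by (simp add: hom_eval_def)
  finally have "hom_eval (1 + card P) ([:- p, q:] * ?L) a b = (q * a - p * b) * (\<Prod>(p, q)\<in>P. q * a - p * b)" .
  moreover have "degree ([:- p, q:] * ?L) \<le> 1 + card P"
    using insert degree_mult_le[of "[:- p, q:]" ?L] deg1 by linarith
  moreover have "card (insert x P) = 1 + card P"
    and "(\<Prod>(p, q)\<in>insert x P. [:- p, q:]) = [:- p, q:] * ?L"
    and "(\<Prod>(p, q)\<in>insert x P. q * a - p * b) = (q * a - p * b) * (\<Prod>(p, q)\<in>P. q * a - p * b)"
    using insert x by simp_all
  ultimately show ?case by argo
qed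

lemma lin_prod:
  assumes "finite P" "card P \<le> d"
  shows "hom_eval d (lin_prod P) a b = (\<Prod>(p, q)\<in>P. q * a - p * b) * b ^ (d - card P)"
    and "degree (lin_prod P) \<le> d"
proof -
  note exact = lin_prod_exact[OF assms(1), of a b]
  have "hom_eval (card P + (d - card P)) (lin_prod P * 1) a b
      = hom_eval (card P) (lin_prod P) a b * hom_eval (d - card P) 1 a b"
    using exact by (intro hom_eval_mult) auto
  moreover have "hom_eval k 1 a b = b ^ k" for k
  proof -
    have "hom_eval k 1 a b = (\<Sum>i\<in>{0}. coeff 1 i * a ^ i * b ^ (k - i))"
      unfolding hom_eval_def by (intro sum.mono_neutral_right) (auto simp: coeff_1)
    then show ?thesis by simp
  qed
  ultimately show "hom_eval d (lin_prod P) a b = (\<Prod>(p, q)\<in>P. q * a - p * b) * b ^ (d - card P)"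
    using exact assms(2) by simp
  show "degree (lin_prod P) \<le> d" using exact assms(2) by simp
qed

lemma lin_prod_vanishes:
  assumes "finite P" "card P \<le> d" "(a, b) \<in> P"
  shows "hom_eval d (lin_prod P) a b = 0"
proof -
  have "(\<Prod>(p, q)\<in>P. q * a - p * b) = 0"
    using assms by (intro prod_zero) (auto intro!: bexI[of _ "(a, b)"] simp: mult.commute)
  then show ?thesis using lin_prod(1)[OF assms(1,2)] by simp
qed

lemma lin_prod_nonzero:
  assumes "finite P" "card P \<le> d" "b \<noteq> 0" "\<And>p q. (p, q) \<in> P \<Longrightarrow> q * a - p * b \<noteq> 0"
  shows "hom_eval d (lin_prod P) a b \<noteq> 0"
proof -
  have "(\<Prod>(p, q)\<in>P. q * a - p * b) \<noteq> 0"
    using assms(1,4) by (simp add: prod_zero_iff split_beta)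
  then show ?thesis using lin_prod(1)[OF assms(1,2)] assms(3) by simp
qed

section \<open>Representations as moment equations\<close>

text \<open>Writing c i = (d choose i) * u i, a representation of binform d c is the same as the
  moment equations u i = sum_j t_j alpha_j^i beta_j^(d-i) + sum_k s1_k^i s2_k^(d-i), i \<le> d.\<close>

definition ncoeff :: "nat \<Rightarrow> (nat \<Rightarrow> complex) \<Rightarrow> nat \<Rightarrow> complex" where
  "ncoeff d c i = c i / of_nat (d choose i)"

definition moment ::
  "nat \<Rightarrow> nat \<Rightarrow> (nat \<Rightarrow> complex) \<Rightarrow> (nat \<Rightarrow> complex) \<Rightarrow> (nat \<Rightarrow> complex)
   \<Rightarrow> (nat \<Rightarrow> complex) \<Rightarrow> (nat \<Rightarrow> complex) \<Rightarrow> nat \<Rightarrow> complex" where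
  "moment d r \<alpha> \<beta> t s1 s2 i =
     (\<Sum>j=1..d + 1 - 2 * r. t j * \<alpha> j ^ i * \<beta> j ^ (d - i)) + (\<Sum>k=1..r. s1 k ^ i * s2 k ^ (d - i))"

lemma binform_eq_iff: "(\<forall>x y. binform d c x y = binform d c' x y) \<longleftrightarrow> (\<forall>i\<le>d. c i = c' i)"
proof
  assume eq: "\<forall>x y. binform d c x y = binform d c' x y"
  define P where "P c = (\<Sum>i\<le>d. monom (c i) i :: complex poly)" for c
  have coeff_P: "coeff (P c) j = (if j \<le> d then c j else 0)" for c j
    unfolding P_def by (simp add: coeff_sum coeff_monom)
  have "poly (P c) x = binform d c x 1" for c x
    unfolding P_def binform_def by (simp add: poly_sum poly_monom)
  then have "poly (P c) = poly (P c')" using eq by auto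
  then have "P c = P c'" using poly_eq_poly_eq_iff by blast
  then show "\<forall>i\<le>d. c i = c' i" using coeff_P by metis
qed (simp add: binform_def)

lemma waring_rep_iff_moments:
  "waring_rep d r \<alpha> \<beta> c t s1 s2 \<longleftrightarrow> (\<forall>i\<le>d. ncoeff d c i = moment d r \<alpha> \<beta> t s1 s2 i)"
proof -
  have pow: "(a * x + b * y) ^ d = (\<Sum>i\<le>d. of_nat (d choose i) * a ^ i * b ^ (d - i) * x ^ i * y ^ (d - i))"
    for a b x y :: complex
    unfolding binomial_ring by (simp add: power_mult_distrib mult_ac)
  have "(\<Sum>j=1..d + 1 - 2 * r. t j * (\<alpha> j * x + \<beta> j * y) ^ d) + (\<Sum>k=1..r. (s1 k * x + s2 k * y) ^ d)
        = binform d (\<lambda>i. of_nat (d choose i) * moment d r \<alpha> \<beta> t s1 s2 i) x y" for x y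
    unfolding binform_def moment_def pow
    by (simp add: sum_distrib_left sum_distrib_right distrib_left sum.distrib mult_ac
        sum.swap[of _ "{..d}"])
  then have "waring_rep d r \<alpha> \<beta> c t s1 s2 \<longleftrightarrow>
      (\<forall>i\<le>d. c i = of_nat (d choose i) * moment d r \<alpha> \<beta> t s1 s2 i)"
    unfolding waring_rep_def using binform_eq_iff by presburger
  then show ?thesis by (auto simp: ncoeff_def field_simps)
qed

text \<open>The apolar pairing of a test polynomial phi (of degree at most d) with the form
  represented by (t, s1, s2): each power of a linear form contributes the value of the
  homogenised phi at its coefficient vector.\<close>

definition rep_value ::
  "nat \<Rightarrow> nat \<Rightarrow> (nat \<Rightarrow> complex) \<Rightarrow> (nat \<Rightarrow> complex) \<Rightarrow> (nat \<Rightarrow> complex)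
   \<Rightarrow> (nat \<Rightarrow> complex) \<Rightarrow> (nat \<Rightarrow> complex) \<Rightarrow> complex poly \<Rightarrow> complex" where
  "rep_value d r \<alpha> \<beta> t s1 s2 \<phi> =
     (\<Sum>j=1..d + 1 - 2 * r. t j * hom_eval d \<phi> (\<alpha> j) (\<beta> j)) + (\<Sum>k=1..r. hom_eval d \<phi> (s1 k) (s2 k))"

text \<open>The pairing depends only on the represented form, so any two representations of the
  same form have the same values on all test polynomials.\<close>

lemma rep_value_coeffs:
  assumes "waring_rep d r \<alpha> \<beta> c t s1 s2" "degree \<phi> \<le> d"
  shows "rep_value d r \<alpha> \<beta> t s1 s2 \<phi> = (\<Sum>i\<le>d. coeff \<phi> i * ncoeff d c i)"
proof -
  have "rep_value d r \<alpha> \<beta> t s1 s2 \<phi> = (\<Sum>i\<le>d. coeff \<phi> i * moment d r \<alpha> \<beta> t s1 s2 i)"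
    unfolding rep_value_def moment_def hom_eval_def
    by (simp add: sum_distrib_left distrib_left sum.distrib mult_ac sum.swap[of _ "{..d}"])
  also have "\<dots> = (\<Sum>i\<le>d. coeff \<phi> i * ncoeff d c i)"
    using assms(1) by (simp add: waring_rep_iff_moments)
  finally show ?thesis .
qed

definition rep_equiv ::
  "nat \<Rightarrow> nat \<Rightarrow> (nat \<Rightarrow> complex) \<Rightarrow> (nat \<Rightarrow> complex) \<Rightarrow> (nat \<Rightarrow> complex)
   \<Rightarrow> (nat \<Rightarrow> complex) \<Rightarrow> (nat \<Rightarrow> complex) \<Rightarrow> (nat \<Rightarrow> complex) \<Rightarrow> bool" where
  "rep_equiv d r t s1 s2 t' s1' s2' \<longleftrightarrow>
     (\<forall>j\<in>{1..d + 1 - 2 * r}. t' j = t j) \<and>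
     (\<exists>\<sigma> \<zeta>. bij_betw \<sigma> {1..r} {1..r} \<and>
        (\<forall>k\<in>{1..r}. \<zeta> k ^ d = 1 \<and> s1' k = \<zeta> k * s1 (\<sigma> k) \<and> s2' k = \<zeta> k * s2 (\<sigma> k)))"

definition unique_waring_rep ::
  "nat \<Rightarrow> nat \<Rightarrow> (nat \<Rightarrow> complex) \<Rightarrow> (nat \<Rightarrow> complex) \<Rightarrow> (nat \<Rightarrow> complex) \<Rightarrow> bool" where
  "unique_waring_rep d r \<alpha> \<beta> c \<longleftrightarrow>
     (\<exists>t s1 s2. waring_rep d r \<alpha> \<beta> c t s1 s2 \<and>
        (\<forall>t' s1' s2'. waring_rep d r \<alpha> \<beta> c t' s1' s2' \<longrightarrow> rep_equiv d r t s1 s2 t' s1' s2'))"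

section \<open>Power sums over a finite set of points\<close>

lemma power_sum_pairing:
  fixes q :: "complex poly"
  assumes "degree q \<le> K" "finite R"
  shows "(\<Sum>e\<le>K. coeff q e * (\<Sum>\<zeta>\<in>R. w \<zeta> * \<zeta> ^ (i + e))) = (\<Sum>\<zeta>\<in>R. w \<zeta> * \<zeta> ^ i * poly q \<zeta>)"
proof -
  have "(\<Sum>e\<le>K. coeff q e * (\<Sum>\<zeta>\<in>R. w \<zeta> * \<zeta> ^ (i + e)))
      = (\<Sum>\<zeta>\<in>R. w \<zeta> * \<zeta> ^ i * (\<Sum>e\<le>K. coeff q e * \<zeta> ^ e))"
    by (simp add: sum_distrib_left sum_distrib_right power_add mult_ac sum.swap[of _ "{..K}"])
  then show ?thesis by (simp add: poly_as_sum_upto[OF assms(1)])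
qed

definition lagrange_basis :: "complex set \<Rightarrow> complex \<Rightarrow> complex poly" where
  "lagrange_basis R \<zeta> = (\<Prod>x\<in>R - {\<zeta>}. [:- x, 1:])"

lemma lagrange_basis:
  assumes "finite R" "\<zeta> \<in> R"
  shows "degree (lagrange_basis R \<zeta>) = card R - 1"
    and "poly (lagrange_basis R \<zeta>) \<zeta> \<noteq> 0"
    and "\<And>x. x \<in> R \<Longrightarrow> x \<noteq> \<zeta> \<Longrightarrow> poly (lagrange_basis R \<zeta>) x = 0"
proof -
  have "degree (lagrange_basis R \<zeta>) = (\<Sum>x\<in>R - {\<zeta>}. degree [:- x, 1::complex:])"
    unfolding lagrange_basis_def by (intro degree_prod_eq_sum_degree) auto
  then show "degree (lagrange_basis R \<zeta>) = card R - 1" using assms by simp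
  show "poly (lagrange_basis R \<zeta>) \<zeta> \<noteq> 0"
    unfolding lagrange_basis_def poly_prod using assms by auto
  show "\<And>x. x \<in> R \<Longrightarrow> x \<noteq> \<zeta> \<Longrightarrow> poly (lagrange_basis R \<zeta>) x = 0"
    unfolding lagrange_basis_def poly_prod using assms by (auto intro: prod_zero)
qed

lemma vandermonde_injective:
  fixes R :: "complex set"
  assumes "finite R" "card R = N" "\<And>i. i < N \<Longrightarrow> (\<Sum>\<zeta>\<in>R. w \<zeta> * \<zeta> ^ i) = 0" "\<zeta>0 \<in> R"
  shows "w \<zeta>0 = 0"
proof -
  let ?L = "lagrange_basis R \<zeta>0"
  have N: "N \<ge> 1" using assms card_0_eq by fastforce
  have "degree ?L \<le> N - 1" using lagrange_basis(1)[OF assms(1,4)] assms by simp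
  then have "(\<Sum>\<zeta>\<in>R. w \<zeta> * \<zeta> ^ 0 * poly ?L \<zeta>) = (\<Sum>e\<le>N - 1. coeff ?L e * (\<Sum>\<zeta>\<in>R. w \<zeta> * \<zeta> ^ (0 + e)))"
    by (rule power_sum_pairing[symmetric, OF _ assms(1)])
  also have "\<dots> = 0" using assms(3) N by (intro sum.neutral) auto
  finally have "(\<Sum>\<zeta>\<in>R. w \<zeta> * \<zeta> ^ 0 * poly ?L \<zeta>) = 0" .
  moreover have "(\<Sum>\<zeta>\<in>R. w \<zeta> * \<zeta> ^ 0 * poly ?L \<zeta>) = w \<zeta>0 * poly ?L \<zeta>0"
    using assms lagrange_basis(3)[OF assms(1,4)] by (subst sum_single_term[of _ \<zeta>0]) auto
  ultimately show ?thesis using lagrange_basis(2)[OF assms(1,4)] by simp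
qed

lemma vandermonde_surjective:
  fixes R :: "complex set"
  assumes "finite R" "card R = N"
  shows "\<exists>w. \<forall>i<N. u i = (\<Sum>\<zeta>\<in>R. w \<zeta> * \<zeta> ^ i)"
proof -
  let ?L = "lagrange_basis R"
  define w where "w \<zeta> = (\<Sum>e<N. coeff (?L \<zeta>) e * u e) / poly (?L \<zeta>) \<zeta>" for \<zeta>
  text \<open>Lagrange interpolation of the monomial x^i from its values on R.\<close>
  have interpolation: "(\<Sum>\<zeta>\<in>R. smult (\<zeta> ^ i / poly (?L \<zeta>) \<zeta>) (?L \<zeta>)) = monom 1 i" if i: "i < N" for i
  proof (rule poly_eqI_degree)
    show "degree (\<Sum>\<zeta>\<in>R. smult (\<zeta> ^ i / poly (?L \<zeta>) \<zeta>) (?L \<zeta>)) < card R"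
    proof -
      have "degree (\<Sum>\<zeta>\<in>R. smult (\<zeta> ^ i / poly (?L \<zeta>) \<zeta>) (?L \<zeta>)) \<le> card R - 1"
        using lagrange_basis(1)[OF assms(1)] assms(1)
        by (intro degree_sum_le) (auto intro: order.trans[OF degree_smult_le])
      then show ?thesis using i assms by linarith
    qed
    show "degree (monom (1::complex) i) < card R" using i assms by (simp add: degree_monom_eq)
    fix x assume x: "x \<in> R"
    have "poly (\<Sum>\<zeta>\<in>R. smult (\<zeta> ^ i / poly (?L \<zeta>) \<zeta>) (?L \<zeta>)) x
        = (\<Sum>\<zeta>\<in>R. \<zeta> ^ i / poly (?L \<zeta>) \<zeta> * poly (?L \<zeta>) x)" by (simp add: poly_sum)
    also have "\<dots> = x ^ i / poly (?L x) x * poly (?L x) x"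
      using assms x lagrange_basis(3)[OF assms(1)] by (subst sum_single_term[of _ x]) auto
    also have "\<dots> = poly (monom 1 i) x" using lagrange_basis(2)[OF assms(1) x] by (simp add: poly_monom)
    finally show "poly (\<Sum>\<zeta>\<in>R. smult (\<zeta> ^ i / poly (?L \<zeta>) \<zeta>) (?L \<zeta>)) x = poly (monom 1 i) x" .
  qed
  have "u i = (\<Sum>\<zeta>\<in>R. w \<zeta> * \<zeta> ^ i)" if i: "i < N" for i
  proof -
    have "(\<Sum>\<zeta>\<in>R. w \<zeta> * \<zeta> ^ i) = (\<Sum>e<N. u e * (\<Sum>\<zeta>\<in>R. \<zeta> ^ i / poly (?L \<zeta>) \<zeta> * coeff (?L \<zeta>) e))"
      unfolding w_def
      by (simp add: sum_divide_distrib sum_distrib_left sum_distrib_right mult_ac sum.swap[of _ R])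
    also have "\<dots> = (\<Sum>e<N. u e * coeff (monom 1 i) e)"
      unfolding interpolation[OF i, symmetric] by (simp add: coeff_sum)
    also have "\<dots> = u i"
      using i by (subst sum_single_term[of _ i]) (auto simp: coeff_monom)
    finally show ?thesis by simp
  qed
  then show ?thesis by blast
qed

lemma recurrence_zero:
  fixes G :: "complex poly"
  assumes "coeff G n \<noteq> 0" "degree G \<le> n"
    and "\<And>i. i < r \<Longrightarrow> (\<Sum>e\<le>n. coeff G e * D (i + e)) = 0"
    and "\<And>i. i < n \<Longrightarrow> D i = 0"
  shows "i < n + r \<Longrightarrow> D i = 0"
proof (induction i rule: less_induct)
  case (less i)
  show ?case
  proof (cases "i < n")
    case True then show ?thesis using assms(4) by simp
  next
    case False
    then obtain i' where i': "i' < r" "i = i' + n" using less.prems by (metis add.commute le_iff_add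
      add_less_cancel_left not_less)
    have "0 = (\<Sum>e\<le>n. coeff G e * D (i' + e))" using assms(3)[OF i'(1)] by simp
    also have "\<dots> = coeff G n * D i"
      using less.IH i' by (subst sum_single_term[of _ n]) auto
    finally show ?thesis using assms(1) by simp
  qed
qed

section \<open>Squarefreeness and the discriminant\<close>

lemma rsquarefree_iff_resultant:
  fixes p :: "complex poly"
  assumes "p \<noteq> 0"
  shows "rsquarefree p \<longleftrightarrow> resultant p (pderiv p) \<noteq> 0"
  unfolding rsquarefree_roots resultant_0_gcd
proof
  assume no_double: "\<forall>a. \<not> (poly p a = 0 \<and> poly (pderiv p) a = 0)"
  show "\<not> degree (gcd p (pderiv p)) \<noteq> 0"
  proof
    assume "degree (gcd p (pderiv p)) \<noteq> 0"
    then have "\<not> constant (poly (gcd p (pderiv p)))" by (simp add: constant_degree)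
    then obtain a where "poly (gcd p (pderiv p)) a = 0" using fundamental_theorem_of_algebra by blast
    then have "[:- a, 1:] dvd gcd p (pderiv p)" by (simp add: poly_eq_0_iff_dvd)
    then have "[:- a, 1:] dvd p" "[:- a, 1:] dvd pderiv p" using dvd_trans by blast+
    then show False using no_double by (simp add: poly_eq_0_iff_dvd)
  qed
next
  assume coprime: "\<not> degree (gcd p (pderiv p)) \<noteq> 0"
  show "\<forall>a. \<not> (poly p a = 0 \<and> poly (pderiv p) a = 0)"
  proof (intro allI notI)
    fix a assume "poly p a = 0 \<and> poly (pderiv p) a = 0"
    then have "[:- a, 1:] dvd gcd p (pderiv p)" by (simp add: poly_eq_0_iff_dvd)
    moreover have "gcd p (pderiv p) \<noteq> 0" using assms by simp
    ultimately have "degree [:- a, 1::complex:] \<le> degree (gcd p (pderiv p))"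
      using dvd_imp_degree_le by blast
    then show False using coprime by simp
  qed
qed

lemma rsquarefree_linear_product:
  fixes R :: "complex set"
  assumes "finite R" "c \<noteq> 0"
  shows "rsquarefree (smult c (\<Prod>x\<in>R. [:- x, 1:]))"
  unfolding rsquarefree_roots
proof (intro allI notI)
  fix a assume a: "poly (smult c (\<Prod>x\<in>R. [:- x, 1:])) a = 0 \<and> poly (pderiv (smult c (\<Prod>x\<in>R. [:- x, 1:]))) a = 0"
  then have aR: "a \<in> R" using assms by (auto simp: poly_prod prod_zero_iff)
  define Q where "Q = (\<Prod>x\<in>R - {a}. [:- x, 1::complex:])"
  have split: "(\<Prod>x\<in>R. [:- x, 1:]) = [:- a, 1:] * Q"
    unfolding Q_def using aR assms(1) by (simp add: prod.remove)
  have "poly Q a \<noteq> 0" unfolding Q_def poly_prod using assms by auto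
  moreover have "poly (pderiv (smult c (\<Prod>x\<in>R. [:- x, 1:]))) a = c * poly Q a"
    unfolding split pderiv_smult pderiv_mult by (simp add: pderiv_pCons)
  ultimately show False using a assms(2) by simp
qed

section \<open>The generic construction\<close>

definition poly_of_vec :: "nat \<Rightarrow> complex vec \<Rightarrow> complex poly" where
  "poly_of_vec r x = (\<Sum>e<r + 1. monom (x $ e) e)"

lemma coeff_poly_of_vec: "coeff (poly_of_vec r x) e = (if e < r + 1 then x $ e else 0)"
  unfolding poly_of_vec_def by (simp add: coeff_sum coeff_monom)

lemma degree_poly_of_vec: "degree (poly_of_vec r x) \<le> r"
  by (rule degree_le) (auto simp: coeff_poly_of_vec)

lemma poly_of_vec_coeffs: "degree q \<le> r \<Longrightarrow> poly_of_vec r (vec (r + 1) (coeff q)) = q"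
  by (rule poly_eqI) (auto simp: coeff_poly_of_vec coeff_eq_0)

text \<open>Normal position: no fixed form is a multiple of x, so every fixed form is
  beta_j (slope_j * x + y) up to the factor beta_j, and the slopes are distinct.\<close>

locale normal_position =
  fixes d r :: nat and \<alpha> \<beta> :: "nat \<Rightarrow> complex"
  assumes d_pos: "d \<ge> 1" and r_bound: "2 * r \<le> d + 1"
    and \<beta>_nonzero: "\<And>j. j \<in> {1..d + 1 - 2 * r} \<Longrightarrow> \<beta> j \<noteq> 0"
    and slopes_distinct: "inj_on (\<lambda>j. \<alpha> j / \<beta> j) {1..d + 1 - 2 * r}"
begin

text \<open>m fixed forms; the generating polynomial below has degree n = m + r.\<close>

definition "m = d + 1 - 2 * r"
definition "n = d + 1 - r"

lemma m_n: "n = m + r" "n + r = d + 1" "m + 2 * r = d + 1" "n \<ge> 1"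
  using r_bound d_pos unfolding n_def m_def by auto

definition slope :: "nat \<Rightarrow> complex" where "slope j = \<alpha> j / \<beta> j"

definition Z :: "complex set" where "Z = slope ` {1..m}"

lemma Z_finite_card: "finite Z" "card Z = m"
  using card_image[OF slopes_distinct] unfolding Z_def slope_def m_def by auto

lemma sum_over_Z: "(\<Sum>\<zeta>\<in>Z. f \<zeta>) = (\<Sum>j=1..m. f (slope j))"
  unfolding Z_def using slopes_distinct unfolding slope_def m_def by (simp add: sum.reindex)

lemma fixed_form_at: "j \<in> {1..m} \<Longrightarrow> \<beta> j \<noteq> 0 \<and> \<alpha> j = slope j * \<beta> j"
  using \<beta>_nonzero unfolding m_def slope_def by auto

definition fixed_poly :: "complex poly" where "fixed_poly = (\<Prod>x\<in>Z. [:- x, 1:])"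

lemma fixed_poly: "degree fixed_poly = m" "poly fixed_poly x = 0 \<longleftrightarrow> x \<in> Z"
proof -
  have "degree fixed_poly = (\<Sum>x\<in>Z. degree [:- x, 1::complex:])"
    unfolding fixed_poly_def by (intro degree_prod_eq_sum_degree) auto
  then show "degree fixed_poly = m" using Z_finite_card by simp
  show "poly fixed_poly x = 0 \<longleftrightarrow> x \<in> Z"
    unfolding fixed_poly_def poly_prod using Z_finite_card by (auto simp: prod_zero_iff)
qed

text \<open>The Hankel (catalecticant) functionals of the form with coefficients c: a polynomial
  q of degree at most n is apolar to the form iff all of them vanish on q.\<close>

definition hankel :: "(nat \<Rightarrow> complex) \<Rightarrow> complex poly \<Rightarrow> nat \<Rightarrow> complex" where
  "hankel c q i = (\<Sum>e\<le>n. coeff q e * ncoeff d c (i + e))"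

lemma hankel_power_sums:
  assumes "finite R" "\<And>i. i \<le> d \<Longrightarrow> ncoeff d c i = (\<Sum>\<zeta>\<in>R. w \<zeta> * \<zeta> ^ i)" "degree q \<le> n" "i < r"
  shows "hankel c q i = (\<Sum>\<zeta>\<in>R. w \<zeta> * \<zeta> ^ i * poly q \<zeta>)"
proof -
  have "hankel c q i = (\<Sum>e\<le>n. coeff q e * (\<Sum>\<zeta>\<in>R. w \<zeta> * \<zeta> ^ (i + e)))"
    unfolding hankel_def using assms(2,4) m_n by (intro sum.cong refl) auto
  also have "\<dots> = (\<Sum>\<zeta>\<in>R. w \<zeta> * \<zeta> ^ i * poly q \<zeta>)" by (rule power_sum_pairing[OF assms(3,1)])
  finally show ?thesis .
qed

text \<open>The linear map h \<mapsto> (hankel c (fixed_poly * h) i for i < r, coeff h r) on polynomials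
  of degree at most r, as a square matrix.  Its adjugate yields a solution h of
  the apolarity conditions normalised by coeff h r = det (hankel_mat c) (Cramer's rule).\<close>

definition hankel_mat :: "(nat \<Rightarrow> complex) \<Rightarrow> complex mat" where
  "hankel_mat c = mat (r + 1) (r + 1)
     (\<lambda>(i, e). if i < r then hankel c (fixed_poly * monom 1 e) i else (if e = r then 1 else 0))"

definition cofactor_poly :: "(nat \<Rightarrow> complex) \<Rightarrow> complex poly" where
  "cofactor_poly c = poly_of_vec r (col (adj_mat (hankel_mat c)) r)"

text \<open>The generating polynomial: its n roots are the slopes of the summands of the
  representation of a general form.\<close>

definition gen_poly :: "(nat \<Rightarrow> complex) \<Rightarrow> complex poly" where
  "gen_poly c = fixed_poly * cofactor_poly c"

definition gen_roots :: "(nat \<Rightarrow> complex) \<Rightarrow> complex set" where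
  "gen_roots c = {x. poly (gen_poly c) x = 0}"

text \<open>The polynomial in the coefficients whose non-vanishing defines the Zariski open set:
  the Hankel matrix is invertible and the generating polynomial has degree n and
  nonzero discriminant.\<close>

definition genericity :: "(nat \<Rightarrow> complex) \<Rightarrow> complex" where
  "genericity c = det (hankel_mat c) * coeff (gen_poly c) n
     * det (sylvester_mat_sub n (n - 1) (gen_poly c) (pderiv (gen_poly c)))"

lemma hankel_mat_carrier: "hankel_mat c \<in> carrier_mat (r + 1) (r + 1)"
  unfolding hankel_mat_def by simp

lemma hankel_mat_mult:
  assumes x: "x \<in> carrier_vec (r + 1)" and i: "i < r"
  shows "(hankel_mat c *\<^sub>v x) $ i = hankel c (fixed_poly * poly_of_vec r x) i"
proof -
  have eq: "(\<Sum>e<r + 1. smult (x $ e) (fixed_poly * monom 1 e)) = fixed_poly * poly_of_vec r x"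
    unfolding poly_of_vec_def
    by (simp add: sum_distrib_left mult_smult_right[symmetric] smult_monom del: sum.lessThan_Suc)
  have "(hankel_mat c *\<^sub>v x) $ i = (\<Sum>e<r + 1. hankel c (fixed_poly * monom 1 e) i * x $ e)"
    using x i unfolding hankel_mat_def by (simp add: scalar_prod_def atLeast0LessThan)
  also have "\<dots> = hankel c (\<Sum>e<r + 1. smult (x $ e) (fixed_poly * monom 1 e)) i"
    unfolding hankel_def
    by (simp add: sum_distrib_left sum_distrib_right coeff_sum mult_ac del: sum.lessThan_Suc)
      (rule sum.swap)
  finally show ?thesis unfolding eq .
qed

lemma hankel_mat_last: "x \<in> carrier_vec (r + 1) \<Longrightarrow> (hankel_mat c *\<^sub>v x) $ r = x $ r"
  unfolding hankel_mat_def by (simp add: scalar_prod_def if_distrib[of "\<lambda>a. a * _"] cong: if_cong)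

lemma gen_poly_apolar:
  shows "\<And>i. i < r \<Longrightarrow> hankel c (gen_poly c) i = 0"
    and "coeff (cofactor_poly c) r = det (hankel_mat c)"
    and "degree (cofactor_poly c) \<le> r"
proof -
  let ?A = "hankel_mat c" and ?B = "adj_mat (hankel_mat c)"
  have B: "?B \<in> carrier_mat (r + 1) (r + 1)" using adj_mat(1)[OF hankel_mat_carrier] .
  have v: "col ?B r \<in> carrier_vec (r + 1)" by (rule col_carrier_vec[OF _ B]) simp
  have "?A *\<^sub>v col ?B r = col (det ?A \<cdot>\<^sub>m 1\<^sub>m (r + 1)) r"
    using col_mult2[OF hankel_mat_carrier[of c] B, of r] adj_mat(2)[OF hankel_mat_carrier] by simp
  then have Av: "(?A *\<^sub>v col ?B r) $ i = (if i = r then det ?A else 0)" if "i < r + 1" for i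
    using that by simp
  show "hankel c (gen_poly c) i = 0" if "i < r" for i
    using hankel_mat_mult[OF v that, of c] Av[of i] that unfolding gen_poly_def cofactor_poly_def by simp
  show "coeff (cofactor_poly c) r = det (hankel_mat c)"
    using hankel_mat_last[OF v] Av[of r] unfolding cofactor_poly_def by (simp add: coeff_poly_of_vec)
  show "degree (cofactor_poly c) \<le> r" unfolding cofactor_poly_def by (rule degree_poly_of_vec)
qed

lemma hankel_kernel_trivial:
  assumes "det (hankel_mat c) \<noteq> 0" "degree q \<le> r" "coeff q r = 0"
    and "\<And>i. i < r \<Longrightarrow> hankel c (fixed_poly * q) i = 0"
  shows "q = 0"
proof -
  define x where "x = vec (r + 1) (coeff q)"
  have x: "x \<in> carrier_vec (r + 1)" unfolding x_def by simp
  have q: "poly_of_vec r x = q" unfolding x_def by (rule poly_of_vec_coeffs[OF assms(2)])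
  have "hankel_mat c *\<^sub>v x = 0\<^sub>v (r + 1)"
  proof (rule eq_vecI)
    fix i assume "i < dim_vec (0\<^sub>v (r + 1) :: complex vec)"
    then consider "i < r" | "i = r" by fastforce
    then show "(hankel_mat c *\<^sub>v x) $ i = 0\<^sub>v (r + 1) $ i"
      by cases (use hankel_mat_mult[OF x] hankel_mat_last[OF x] q assms(3,4) x_def in auto)
  qed (simp add: hankel_mat_def)
  then have "x = 0\<^sub>v (r + 1)"
    using det_0_iff_vec_prod_zero[OF hankel_mat_carrier] assms(1) x by blast
  then show "q = 0" using q by (simp add: poly_of_vec_def)
qed

lemma polyfun_hankel: "i < r \<Longrightarrow> (\<lambda>c. hankel c q i) \<in> polyfun (Suc d)"
  unfolding hankel_def ncoeff_def divide_inverse using m_n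
  by (intro polyfun_sum polyfun.mult polyfun.const polyfun.var) auto

lemma polyfun_hankel_mat: "i < r + 1 \<Longrightarrow> j < r + 1 \<Longrightarrow> (\<lambda>c. hankel_mat c $$ (i, j)) \<in> polyfun (Suc d)"
  unfolding hankel_mat_def by (auto intro!: polyfun_if polyfun_hankel polyfun.const)

text \<open>The coefficients of the cofactor polynomial are cofactors of the Hankel matrix.\<close>

lemma polyfun_cofactor_poly: "(\<lambda>c. coeff (cofactor_poly c) e) \<in> polyfun (Suc d)"
proof (cases "e < r + 1")
  case True
  have "coeff (cofactor_poly c) e = (- 1) ^ (r + e) * det (mat_delete (hankel_mat c) r e)" for c
    unfolding cofactor_poly_def coeff_poly_of_vec using True hankel_mat_carrier[of c]
    by (simp add: adj_mat_def cofactor_def)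
  moreover have "(\<lambda>c. det (mat_delete (hankel_mat c) r e)) \<in> polyfun (Suc d)"
  proof (rule polyfun_det)
    show "\<And>c. mat_delete (hankel_mat c) r e \<in> carrier_mat r r"
      using mat_delete_carrier[OF hankel_mat_carrier] by fastforce
    fix i j assume "i < r" "j < r"
    have "mat_delete (hankel_mat c) r e $$ (i, j)
        = hankel_mat c $$ (i, if j < e then j else Suc j)" for c
      unfolding mat_delete_def using \<open>i < r\<close> \<open>j < r\<close>
      by (simp add: carrier_matD[OF hankel_mat_carrier])
    moreover have "(\<lambda>c. hankel_mat c $$ (i, if j < e then j else Suc j)) \<in> polyfun (Suc d)"
      using \<open>i < r\<close> \<open>j < r\<close> by (intro polyfun_hankel_mat) auto
    ultimately show "(\<lambda>c. mat_delete (hankel_mat c) r e $$ (i, j)) \<in> polyfun (Suc d)" by simp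
  qed
  ultimately show ?thesis by (auto intro!: polyfun.mult polyfun.const)
next
  case False then show ?thesis unfolding cofactor_poly_def coeff_poly_of_vec by (simp add: polyfun.const)
qed

lemma polyfun_gen_poly:
  "(\<lambda>c. coeff (gen_poly c) k) \<in> polyfun (Suc d)"
  "(\<lambda>c. coeff (pderiv (gen_poly c)) k) \<in> polyfun (Suc d)"
proof -
  show gen: "(\<lambda>c. coeff (gen_poly c) k) \<in> polyfun (Suc d)" for k
    unfolding gen_poly_def coeff_mult
    by (intro polyfun_sum polyfun.mult polyfun.const polyfun_cofactor_poly)
  show "(\<lambda>c. coeff (pderiv (gen_poly c)) k) \<in> polyfun (Suc d)"
    unfolding coeff_pderiv by (intro polyfun.mult polyfun.const gen)
qed

lemma polyfun_genericity: "genericity \<in> polyfun (d + 1)"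
proof -
  have "(\<lambda>c. det (sylvester_mat_sub n (n - 1) (gen_poly c) (pderiv (gen_poly c)))) \<in> polyfun (Suc d)"
  proof (rule polyfun_det)
    show "\<And>c. sylvester_mat_sub n (n - 1) (gen_poly c) (pderiv (gen_poly c))
              \<in> carrier_mat (n + (n - 1)) (n + (n - 1))"
      by (rule sylvester_mat_sub_carrier)
    fix i j
    show "(\<lambda>c. sylvester_mat_sub n (n - 1) (gen_poly c) (pderiv (gen_poly c)) $$ (i, j)) \<in> polyfun (Suc d)"
      if "i < n + (n - 1)" "j < n + (n - 1)"
      using that unfolding sylvester_mat_sub_def
      by (simp only: index_mat split) (intro polyfun_if polyfun_gen_poly polyfun.const)
  qed
  then have "(\<lambda>c. genericity c) \<in> polyfun (Suc d)"
    unfolding genericity_def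
    by (intro polyfun.mult polyfun_gen_poly polyfun_det[OF hankel_mat_carrier polyfun_hankel_mat])
  then show ?thesis by simp
qed

lemma gen_poly_generic:
  assumes "genericity c \<noteq> 0"
  shows "degree (gen_poly c) = n" and "coeff (gen_poly c) n \<noteq> 0"
    and "finite (gen_roots c)" and "card (gen_roots c) = n" and "Z \<subseteq> gen_roots c"
proof -
  let ?G = "gen_poly c"
  have lc: "coeff ?G n \<noteq> 0"
    and S: "det (sylvester_mat_sub n (n - 1) ?G (pderiv ?G)) \<noteq> 0"
    using assms unfolding genericity_def by auto
  have "degree ?G \<le> n" unfolding gen_poly_def
    using degree_mult_le[of fixed_poly "cofactor_poly c"] fixed_poly(1) gen_poly_apolar(3)[of c] m_n
    by linarith
  then show dG: "degree ?G = n" using le_degree[OF lc] by simp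
  show "coeff ?G n \<noteq> 0" by (fact lc)
  have G: "?G \<noteq> 0" using lc by auto
  show fin: "finite (gen_roots c)" unfolding gen_roots_def using poly_roots_finite[OF G] .
  have "resultant ?G (pderiv ?G) \<noteq> 0"
    using S unfolding resultant_sub resultant_sub_def dG degree_pderiv by simp
  then have "rsquarefree ?G" using rsquarefree_iff_resultant[OF G] by blast
  then have "smult (lead_coeff ?G) (\<Prod>x\<in>gen_roots c. [:- x, 1:]) = ?G"
    unfolding gen_roots_def by (rule complex_poly_decompose_rsquarefree)
  moreover have "degree (\<Prod>x\<in>gen_roots c. [:- x, 1::complex:]) = card (gen_roots c)"
    by (subst degree_prod_eq_sum_degree) auto
  ultimately show "card (gen_roots c) = n" using dG G by (metis degree_smult_eq leading_coeff_0_iff)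
  show "Z \<subseteq> gen_roots c" unfolding gen_roots_def gen_poly_def using fixed_poly(2) by auto
qed

text \<open>The normalised coefficients are weighted power sums over the roots: the first n of
  them by Vandermonde interpolation, the rest because the apolarity conditions are a linear
  recurrence with characteristic polynomial gen_poly c.\<close>

lemma moments_on_gen_roots:
  assumes "genericity c \<noteq> 0"
  obtains w where "\<And>i. i \<le> d \<Longrightarrow> ncoeff d c i = (\<Sum>\<zeta>\<in>gen_roots c. w \<zeta> * \<zeta> ^ i)"
proof -
  let ?G = "gen_poly c" and ?R = "gen_roots c"
  note G = gen_poly_generic[OF assms]
  obtain w where w: "\<And>i. i < n \<Longrightarrow> ncoeff d c i = (\<Sum>\<zeta>\<in>?R. w \<zeta> * \<zeta> ^ i)"
    using vandermonde_surjective[OF G(3,4), of "ncoeff d c"] by blast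
  define D where "D i = ncoeff d c i - (\<Sum>\<zeta>\<in>?R. w \<zeta> * \<zeta> ^ i)" for i
  have "(\<Sum>e\<le>n. coeff ?G e * D (i + e)) = 0" if i: "i < r" for i
  proof -
    have "(\<Sum>e\<le>n. coeff ?G e * D (i + e))
        = hankel c ?G i - (\<Sum>e\<le>n. coeff ?G e * (\<Sum>\<zeta>\<in>?R. w \<zeta> * \<zeta> ^ (i + e)))"
      unfolding D_def hankel_def by (simp add: right_diff_distrib sum_subtractf)
    also have "\<dots> = - (\<Sum>\<zeta>\<in>?R. w \<zeta> * \<zeta> ^ i * poly ?G \<zeta>)"
      using gen_poly_apolar(1)[OF i] power_sum_pairing[OF eq_imp_le[OF G(1)] G(3)] by simp
    also have "\<dots> = 0" unfolding gen_roots_def by simp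
    finally show ?thesis .
  qed
  then have "D i = 0" if "i \<le> d" for i
    using recurrence_zero[of ?G n r D i] G(1,2) w that m_n unfolding D_def by auto
  then show ?thesis using that unfolding D_def by simp
qed

text \<open>The weights at the new roots are nonzero: otherwise fixed_poly times the product of
  the other new linear factors would be a nonzero apolar polynomial of too small degree.\<close>

lemma weights_nonzero:
  assumes "genericity c \<noteq> 0"
    and w: "\<And>i. i \<le> d \<Longrightarrow> ncoeff d c i = (\<Sum>\<zeta>\<in>gen_roots c. w \<zeta> * \<zeta> ^ i)"
    and y0: "y0 \<in> gen_roots c - Z"
  shows "w y0 \<noteq> 0"
proof
  assume w0: "w y0 = 0"
  let ?R = "gen_roots c" and ?Y = "gen_roots c - Z"
  note G = gen_poly_generic[OF assms(1)]
  have cY: "card ?Y = r" using card_Diff_subset[OF Z_finite_card(1) G(5)] G(4) Z_finite_card(2) m_n by simp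
  define q where "q = (\<Prod>y\<in>?Y - {y0}. [:- y, 1::complex:])"
  have "degree q = (\<Sum>y\<in>?Y - {y0}. degree [:- y, 1::complex:])"
    unfolding q_def by (intro degree_prod_eq_sum_degree) auto
  then have dq: "degree q = r - 1" using cY G(3) y0 by simp
  have "r \<ge> 1" using cY y0 G(3) by (metis card_0_eq empty_iff finite_Diff less_one not_le)
  have "q = 0"
  proof (rule hankel_kernel_trivial)
    show "det (hankel_mat c) \<noteq> 0" using assms(1) unfolding genericity_def by auto
    show "degree q \<le> r" and "coeff q r = 0" using dq \<open>r \<ge> 1\<close> by (auto simp: coeff_eq_0)
    fix i assume i: "i < r"
    have "degree (fixed_poly * q) \<le> n"
      using degree_mult_le[of fixed_poly q] fixed_poly(1) dq m_n by linarith
    then have "hankel c (fixed_poly * q) i = (\<Sum>\<zeta>\<in>?R. w \<zeta> * \<zeta> ^ i * poly (fixed_poly * q) \<zeta>)"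
      using hankel_power_sums[OF G(3) w _ i] by blast
    also have "\<dots> = 0"
    proof (intro sum.neutral ballI)
      fix \<zeta> assume "\<zeta> \<in> ?R"
      then consider "\<zeta> \<in> Z" | "\<zeta> \<in> ?Y - {y0}" | "\<zeta> = y0" by blast
      then show "w \<zeta> * \<zeta> ^ i * poly (fixed_poly * q) \<zeta> = 0"
        by cases (auto simp: fixed_poly(2) w0 q_def poly_prod G(3) intro: prod_zero)
    qed
    finally show "hankel c (fixed_poly * q) i = 0" .
  qed
  then show False unfolding q_def by (simp add: prod_zero_iff G(3))
qed

subsection \<open>The genericity polynomial does not vanish identically\<close>

text \<open>The witness: a form whose normalised coefficients are the power sums of Z together
  with r further points Y0.  Then the apolar polynomial is forced to be the product of
  the linear factors of Z and Y0, which is squarefree.\<close>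

context
  fixes Y0 :: "complex set" and c0 :: "nat \<Rightarrow> complex"
  assumes Y0: "finite Y0" "card Y0 = r" "Y0 \<inter> Z = {}"
    and c0: "\<And>i. i \<le> d \<Longrightarrow> ncoeff d c0 i = (\<Sum>\<zeta>\<in>Z \<union> Y0. 1 * \<zeta> ^ i)"
begin

text \<open>For the witness the Hankel functionals of fixed_poly * q only see the points Y0, so
  by the Vandermonde injectivity they force q to vanish on Y0.\<close>

lemma hankel_witness:
  assumes "degree q \<le> r" "i < r"
  shows "hankel c0 (fixed_poly * q) i = (\<Sum>y\<in>Y0. (poly fixed_poly y * poly q y) * y ^ i)"
proof -
  have "degree (fixed_poly * q) \<le> n"
    using degree_mult_le[of fixed_poly q] fixed_poly(1) assms m_n by linarith
  then have "hankel c0 (fixed_poly * q) i = (\<Sum>\<zeta>\<in>Z \<union> Y0. 1 * \<zeta> ^ i * poly (fixed_poly * q) \<zeta>)"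
    using Z_finite_card(1) Y0(1) c0 assms(2) by (intro hankel_power_sums) auto
  also have "\<dots> = (\<Sum>\<zeta>\<in>Z. 1 * \<zeta> ^ i * poly (fixed_poly * q) \<zeta>) + (\<Sum>\<zeta>\<in>Y0. 1 * \<zeta> ^ i * poly (fixed_poly * q) \<zeta>)"
    using Z_finite_card(1) Y0(1,3) by (intro sum.union_disjoint) auto
  also have "(\<Sum>\<zeta>\<in>Z. 1 * \<zeta> ^ i * poly (fixed_poly * q) \<zeta>) = 0"
    using fixed_poly(2) by (intro sum.neutral) auto
  finally show ?thesis by (simp add: mult_ac)
qed

lemma hankel_witness_kernel:
  assumes "degree q \<le> r" "coeff q r = 0" "\<And>i. i < r \<Longrightarrow> hankel c0 (fixed_poly * q) i = 0"
  shows "q = 0"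
proof (rule poly_eqI_degree_lead_coeff[of q r 0 Y0])
  fix y assume y: "y \<in> Y0"
  have "poly fixed_poly y * poly q y = 0"
    using vandermonde_injective[OF Y0(1,2), of "\<lambda>y. poly fixed_poly y * poly q y" y]
      hankel_witness[OF assms(1)] assms(3) y by auto
  moreover have "poly fixed_poly y \<noteq> 0" using fixed_poly(2) y Y0(3) by auto
  ultimately show "poly q y = poly 0 y" by simp
qed (use assms Y0 in auto)

lemma det_hankel_witness: "det (hankel_mat c0) \<noteq> 0"
proof
  assume "det (hankel_mat c0) = 0"
  then obtain x where x: "x \<in> carrier_vec (r + 1)" "x \<noteq> 0\<^sub>v (r + 1)" "hankel_mat c0 *\<^sub>v x = 0\<^sub>v (r + 1)"
    using det_0_iff_vec_prod_zero[OF hankel_mat_carrier] by blast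
  have "poly_of_vec r x = 0"
  proof (rule hankel_witness_kernel[OF degree_poly_of_vec])
    show "coeff (poly_of_vec r x) r = 0"
      using hankel_mat_last[OF x(1), of c0] x(3) by (simp add: coeff_poly_of_vec)
    show "hankel c0 (fixed_poly * poly_of_vec r x) i = 0" if "i < r" for i
      using hankel_mat_mult[OF x(1) that, of c0] x(3) that by simp
  qed
  then have "x $ e = 0" if "e < r + 1" for e using that coeff_poly_of_vec[of r x e] by simp
  then have "x = 0\<^sub>v (r + 1)" using x(1) by (intro eq_vecI) auto
  then show False using x(2) by simp
qed

lemma gen_poly_witness: "gen_poly c0 = smult (det (hankel_mat c0)) (\<Prod>x\<in>Z \<union> Y0. [:- x, 1:])"
proof -
  define P where "P = (\<Prod>y\<in>Y0. [:- y, 1::complex:])"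
  have dP: "degree P = r"
    unfolding P_def using Y0 by (subst degree_prod_eq_sum_degree) auto
  have lP: "coeff P r = 1" using dP lead_coeff_prod[of "\<lambda>y. [:- y, 1::complex:]" Y0] unfolding P_def by simp
  have P0: "poly P y = 0" if "y \<in> Y0" for y
    unfolding P_def poly_prod using that Y0(1) by (auto intro: prod_zero)
  let ?D = "det (hankel_mat c0)" and ?H = "cofactor_poly c0"
  have "?H - smult ?D P = 0"
  proof (rule hankel_witness_kernel)
    show deg: "degree (?H - smult ?D P) \<le> r"
      using gen_poly_apolar(3)[of c0] dP by (intro degree_diff_le) (auto intro: order.trans[OF degree_smult_le])
    show "coeff (?H - smult ?D P) r = 0" using gen_poly_apolar(2)[of c0] lP by simp
    fix i assume i: "i < r"
    have "hankel c0 (fixed_poly * (?H - smult ?D P)) i = (\<Sum>y\<in>Y0. (poly fixed_poly y * poly ?H y) * y ^ i)"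
      using hankel_witness[OF deg i] P0 by simp
    also have "\<dots> = hankel c0 (gen_poly c0) i"
      unfolding gen_poly_def using hankel_witness[OF gen_poly_apolar(3) i] by simp
    finally show "hankel c0 (fixed_poly * (?H - smult ?D P)) i = 0" using gen_poly_apolar(1)[OF i] by simp
  qed
  then show ?thesis
    unfolding gen_poly_def fixed_poly_def P_def using Y0 Z_finite_card(1)
    by (simp add: prod.union_disjoint Int_commute mult_smult_right)
qed

lemma genericity_witness: "genericity c0 \<noteq> 0"
proof -
  let ?D = "det (hankel_mat c0)" and ?R = "Z \<union> Y0"
  have R: "finite ?R" "card ?R = n" using Z_finite_card Y0 m_n by (auto simp: card_Un_disjoint Int_commute)
  have dR: "degree (\<Prod>x\<in>?R. [:- x, 1::complex:]) = n"
    using R by (subst degree_prod_eq_sum_degree) auto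
  have lR: "coeff (\<Prod>x\<in>?R. [:- x, 1::complex:]) n = 1"
    using dR lead_coeff_prod[of "\<lambda>y. [:- y, 1::complex:]" ?R] by simp
  have dG: "degree (gen_poly c0) = n" and cG: "coeff (gen_poly c0) n = ?D"
    unfolding gen_poly_witness using det_hankel_witness dR lR by simp_all
  have "rsquarefree (gen_poly c0)"
    unfolding gen_poly_witness by (intro rsquarefree_linear_product R(1) det_hankel_witness)
  moreover have "gen_poly c0 \<noteq> 0" using dG m_n by auto
  ultimately have "resultant (gen_poly c0) (pderiv (gen_poly c0)) \<noteq> 0"
    using rsquarefree_iff_resultant by blast
  then have "det (sylvester_mat_sub n (n - 1) (gen_poly c0) (pderiv (gen_poly c0))) \<noteq> 0"
    unfolding resultant_sub resultant_sub_def dG degree_pderiv .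
  then show ?thesis unfolding genericity_def cG using det_hankel_witness by simp
qed

end

text \<open>Such a witness exists since there are infinitely many points outside Z.\<close>

lemma genericity_nonzero: "\<exists>c. genericity c \<noteq> 0"
proof -
  have "infinite (UNIV - Z)" using Z_finite_card(1) infinite_UNIV_char_0 by (simp add: Diff_infinite_finite)
  then obtain Y0 where Y0: "Y0 \<subseteq> UNIV - Z" "finite Y0" "card Y0 = r"
    using infinite_arbitrarily_large by blast
  define c0 where "c0 i = of_nat (d choose i) * (\<Sum>\<zeta>\<in>Z \<union> Y0. \<zeta> ^ i)" for i
  have "genericity c0 \<noteq> 0"
    by (rule genericity_witness[of Y0]) (use Y0 in \<open>auto simp: c0_def ncoeff_def\<close>)
  then show ?thesis by blast
qed

definition generic_rep ::
  "(nat \<Rightarrow> complex) \<Rightarrow> (nat \<Rightarrow> complex) \<Rightarrow> (nat \<Rightarrow> complex) \<Rightarrow> (nat \<Rightarrow> complex) \<Rightarrow> bool" where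
  "generic_rep c t \<mu> ys \<longleftrightarrow> waring_rep d r \<alpha> \<beta> c t (\<lambda>k. \<mu> k * ys k) \<mu> \<and> inj_on ys {1..r}
     \<and> (\<forall>k\<in>{1..r}. ys k \<notin> Z \<and> \<mu> k \<noteq> 0)"

lemma waring_rep_of_power_sums:
  assumes "\<And>i. i \<le> d \<Longrightarrow> ncoeff d c i = (\<Sum>\<zeta>\<in>Z. w \<zeta> * \<zeta> ^ i) + (\<Sum>k=1..r. \<mu> k ^ d * ys k ^ i)"
  shows "waring_rep d r \<alpha> \<beta> c (\<lambda>j. w (slope j) / \<beta> j ^ d) (\<lambda>k. \<mu> k * ys k) \<mu>"
  unfolding waring_rep_iff_moments
proof (intro allI impI)
  fix i assume i: "i \<le> d"
  have "(\<Sum>\<zeta>\<in>Z. w \<zeta> * \<zeta> ^ i) = (\<Sum>j=1..m. w (slope j) / \<beta> j ^ d * \<alpha> j ^ i * \<beta> j ^ (d - i))"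
    unfolding sum_over_Z
  proof (intro sum.cong refl)
    fix j assume j: "j \<in> {1..m}"
    have "\<beta> j ^ d = \<beta> j ^ i * \<beta> j ^ (d - i)" using i by (simp flip: power_add)
    then show "w (slope j) * slope j ^ i = w (slope j) / \<beta> j ^ d * \<alpha> j ^ i * \<beta> j ^ (d - i)"
      using fixed_form_at[OF j] unfolding slope_def by (simp add: power_divide field_simps)
  qed
  moreover have "\<mu> k ^ d * ys k ^ i = (\<mu> k * ys k) ^ i * \<mu> k ^ (d - i)" for k
  proof -
    have "\<mu> k ^ d = \<mu> k ^ i * \<mu> k ^ (d - i)" using i by (simp flip: power_add)
    then show ?thesis by (simp add: power_mult_distrib mult_ac)
  qed
  ultimately show "ncoeff d c i = moment d r \<alpha> \<beta> (\<lambda>j. w (slope j) / \<beta> j ^ d) (\<lambda>k. \<mu> k * ys k) \<mu> i"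
    using assms[OF i] unfolding moment_def m_def by simp
qed

text \<open>For a general form, the new roots of the generating polynomial are the slopes of
  the free forms, and d-th roots of the (nonzero) weights are their scales.\<close>

lemma generic_rep_exists:
  assumes "genericity c \<noteq> 0"
  shows "\<exists>t \<mu> ys. generic_rep c t \<mu> ys"
proof -
  note G = gen_poly_generic[OF assms]
  obtain w where w: "\<And>i. i \<le> d \<Longrightarrow> ncoeff d c i = (\<Sum>\<zeta>\<in>gen_roots c. w \<zeta> * \<zeta> ^ i)"
    using moments_on_gen_roots[OF assms] by blast
  let ?Y = "gen_roots c - Z"
  have "card ?Y = r" using card_Diff_subset[OF Z_finite_card(1) G(5)] G(4) Z_finite_card(2) m_n by simp
  then obtain ys where ys: "bij_betw ys {1..r} ?Y"
    using ex_bij_betw_nat_finite_1[of ?Y] G(3) by auto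
  have "\<exists>\<mu>. \<mu> ^ d = w (ys k) \<and> \<mu> \<noteq> 0" if "k \<in> {1..r}" for k
    using nth_root_exists[OF d_pos weights_nonzero[OF assms w]] ys that by (metis bij_betwE)
  then obtain \<mu> where \<mu>: "\<And>k. k \<in> {1..r} \<Longrightarrow> \<mu> k ^ d = w (ys k) \<and> \<mu> k \<noteq> 0" by metis
  have "ncoeff d c i = (\<Sum>\<zeta>\<in>Z. w \<zeta> * \<zeta> ^ i) + (\<Sum>k=1..r. \<mu> k ^ d * ys k ^ i)" if i: "i \<le> d" for i
  proof -
    have "ncoeff d c i = (\<Sum>\<zeta>\<in>Z. w \<zeta> * \<zeta> ^ i) + (\<Sum>y\<in>?Y. w y * y ^ i)"
      using w[OF i] sum.subset_diff[OF G(5,3)] by (simp add: add.commute)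
    also have "(\<Sum>y\<in>?Y. w y * y ^ i) = (\<Sum>k=1..r. w (ys k) * ys k ^ i)"
      using sum.reindex_bij_betw[OF ys, of "\<lambda>y. w y * y ^ i"] by simp
    finally show ?thesis using \<mu> by simp
  qed
  then have "waring_rep d r \<alpha> \<beta> c (\<lambda>j. w (slope j) / \<beta> j ^ d) (\<lambda>k. \<mu> k * ys k) \<mu>"
    by (rule waring_rep_of_power_sums)
  moreover have "inj_on ys {1..r}" "\<forall>k\<in>{1..r}. ys k \<notin> Z \<and> \<mu> k \<noteq> 0"
    using ys \<mu> by (auto simp: bij_betw_def)
  ultimately show ?thesis unfolding generic_rep_def by blast
qed

subsection \<open>Uniqueness\<close>

text \<open>Two fixed forms, and a fixed form and a free form of normal shape, are never
  proportional; these are the non-vanishing factors of the test forms below.\<close>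

lemma fixed_forms_independent:
  "j \<in> {1..m} \<Longrightarrow> j' \<in> {1..m} \<Longrightarrow> j \<noteq> j' \<Longrightarrow> \<beta> j' * \<alpha> j - \<alpha> j' * \<beta> j \<noteq> 0"
  using fixed_form_at[of j] fixed_form_at[of j'] slopes_distinct
  unfolding inj_on_def slope_def m_def by (auto simp: field_simps)

lemma fixed_new_independent:
  "j \<in> {1..m} \<Longrightarrow> y \<notin> Z \<Longrightarrow> \<beta> j * y - \<alpha> j * 1 \<noteq> 0 \<and> 1 * \<alpha> j - y * \<beta> j \<noteq> 0"
  using fixed_form_at[of j] unfolding Z_def by (auto simp: algebra_simps)

text \<open>Uniqueness is proved by pairing both representations with test forms that are
  products of linear forms through all but one of the relevant points.\<close>

context
  fixes c t \<mu> ys t' s1' s2'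
  assumes gen: "generic_rep c t \<mu> ys"
    and rep': "waring_rep d r \<alpha> \<beta> c t' s1' s2'"
begin

lemma ys_inj: "inj_on ys {1..r}" and ys_new: "k \<in> {1..r} \<Longrightarrow> ys k \<notin> Z"
  and \<mu>_nonzero: "k \<in> {1..r} \<Longrightarrow> \<mu> k \<noteq> 0"
  using gen unfolding generic_rep_def by auto

lemma pairing_agrees:
  assumes "degree \<phi> \<le> d"
  shows "(\<Sum>j=1..m. t j * hom_eval d \<phi> (\<alpha> j) (\<beta> j)) + (\<Sum>k=1..r. \<mu> k ^ d * hom_eval d \<phi> (ys k) 1)
       = rep_value d r \<alpha> \<beta> t' s1' s2' \<phi>"
proof -
  have "rep_value d r \<alpha> \<beta> t (\<lambda>k. \<mu> k * ys k) \<mu> \<phi> = rep_value d r \<alpha> \<beta> t' s1' s2' \<phi>"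
    using gen rep' assms unfolding generic_rep_def by (simp add: rep_value_coeffs)
  moreover have "hom_eval d \<phi> (\<mu> k * ys k) (\<mu> k) = \<mu> k ^ d * hom_eval d \<phi> (ys k) 1" for k
    using hom_eval_scale[of d \<phi> "\<mu> k" "ys k" 1] by simp
  ultimately show ?thesis unfolding rep_value_def m_def by simp
qed

lemma pairing_single_free_point:
  assumes P: "finite P" "card P \<le> d" and k0: "k0 \<in> {1..r}"
    and fixed: "\<And>j. j \<in> {1..m} \<Longrightarrow> (\<alpha> j, \<beta> j) \<in> P"
    and others: "\<And>k. k \<in> {1..r} \<Longrightarrow> k \<noteq> k0 \<Longrightarrow> (ys k, 1) \<in> P"
  shows "rep_value d r \<alpha> \<beta> t' s1' s2' (lin_prod P) = \<mu> k0 ^ d * hom_eval d (lin_prod P) (ys k0) 1"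
proof -
  note vanish = lin_prod_vanishes[OF P]
  have "(\<Sum>k=1..r. \<mu> k ^ d * hom_eval d (lin_prod P) (ys k) 1) = \<mu> k0 ^ d * hom_eval d (lin_prod P) (ys k0) 1"
    using vanish others by (intro sum_single_term k0) auto
  then show ?thesis using pairing_agrees[OF lin_prod(2)[OF P]] vanish fixed by simp
qed

lemma test_form_nonzero_at_free_point:
  assumes P: "finite P" "card P \<le> d" and k0: "k0 \<in> {1..r}"
    and points: "\<And>p q. (p, q) \<in> P \<Longrightarrow> (\<exists>j\<in>{1..m}. (p, q) = (\<alpha> j, \<beta> j))
       \<or> (\<exists>k\<in>{1..r}. k \<noteq> k0 \<and> (p, q) = (ys k, 1)) \<or> q * ys k0 - p * 1 \<noteq> 0"
  shows "hom_eval d (lin_prod P) (ys k0) 1 \<noteq> 0"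
proof (rule lin_prod_nonzero[OF P])
  fix p q assume "(p, q) \<in> P"
  then consider j where "j \<in> {1..m}" "(p, q) = (\<alpha> j, \<beta> j)"
    | k where "k \<in> {1..r}" "k \<noteq> k0" "(p, q) = (ys k, 1)" | "q * ys k0 - p * 1 \<noteq> 0"
    using points by blast
  then show "q * ys k0 - p * 1 \<noteq> 0"
  proof cases
    case 1 then show ?thesis using fixed_new_independent ys_new[OF k0] by simp
  next
    case 2
    then have "ys k \<noteq> ys k0" using inj_onD[OF ys_inj] k0 by blast
    then show ?thesis using 2 by simp
  qed
qed simp

text \<open>Every free form of the normal representation reappears in the other one: otherwise
  the test form through all points except (ys k0, 1), including the free points of the
  other representation, pairs to zero with the latter but not with the former.\<close>

lemma free_form_reappears:
  assumes k0: "k0 \<in> {1..r}"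
  shows "\<exists>k\<in>{1..r}. s2' k \<noteq> 0 \<and> s1' k = ys k0 * s2' k"
proof (rule ccontr)
  assume none: "\<not> ?thesis"
  define K where "K = {k\<in>{1..r}. (s1' k, s2' k) \<noteq> (0, 0)}"
  define P where "P = (\<lambda>j. (\<alpha> j, \<beta> j)) ` {1..m} \<union> (\<lambda>k. (ys k, 1)) ` ({1..r} - {k0})
    \<union> (\<lambda>k. (s1' k, s2' k)) ` K"
  have "card K \<le> card {1..r}" unfolding K_def by (rule card_mono) auto
  moreover have "card P \<le> card {1..m} + card ({1..r} - {k0}) + card K"
    unfolding P_def K_def by (rule card_image_Un3_le) auto
  ultimately have P: "finite P" "card P \<le> d" using k0 m_n unfolding P_def K_def by auto
  have "rep_value d r \<alpha> \<beta> t' s1' s2' (lin_prod P) = \<mu> k0 ^ d * hom_eval d (lin_prod P) (ys k0) 1"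
    using P k0 by (intro pairing_single_free_point) (auto simp: P_def)
  moreover have "rep_value d r \<alpha> \<beta> t' s1' s2' (lin_prod P) = 0"
  proof -
    have "hom_eval d (lin_prod P) (s1' k) (s2' k) = 0" if "k \<in> {1..r}" for k
    proof (cases "k \<in> K")
      case True then show ?thesis using lin_prod_vanishes[OF P] unfolding P_def by blast
    next
      case False then show ?thesis using hom_eval_zero_point[OF d_pos] that unfolding K_def by simp
    qed
    moreover have "hom_eval d (lin_prod P) (\<alpha> j) (\<beta> j) = 0" if "j \<in> {1..m}" for j
      using lin_prod_vanishes[OF P] that unfolding P_def by blast
    ultimately show ?thesis unfolding rep_value_def m_def by simp
  qed
  moreover have "hom_eval d (lin_prod P) (ys k0) 1 \<noteq> 0"
  proof (rule test_form_nonzero_at_free_point[OF P k0])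
    fix p q assume "(p, q) \<in> P"
    moreover have "s2' k * ys k0 - s1' k * 1 \<noteq> 0" if "k \<in> K" for k
      using none that unfolding K_def by (cases "s2' k = 0") (auto simp: mult.commute)
    ultimately show "(\<exists>j\<in>{1..m}. (p, q) = (\<alpha> j, \<beta> j))
       \<or> (\<exists>k\<in>{1..r}. k \<noteq> k0 \<and> (p, q) = (ys k, 1)) \<or> q * ys k0 - p * 1 \<noteq> 0"
      unfolding P_def by blast
  qed
  ultimately show False using \<mu>_nonzero[OF k0] by simp
qed

lemma matching_permutation:
  obtains \<sigma> where "bij_betw \<sigma> {1..r} {1..r}"
    and "\<And>k. k \<in> {1..r} \<Longrightarrow> s2' k \<noteq> 0 \<and> s1' k = ys (\<sigma> k) * s2' k"
proof -
  obtain \<tau> where \<tau>: "\<And>k. k \<in> {1..r} \<Longrightarrow> \<tau> k \<in> {1..r} \<and> s2' (\<tau> k) \<noteq> 0 \<and> s1' (\<tau> k) = ys k * s2' (\<tau> k)"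
    using free_form_reappears by metis
  have inj: "inj_on \<tau> {1..r}"
  proof (rule inj_onI)
    fix a b assume a: "a \<in> {1..r}" and b: "b \<in> {1..r}" and "\<tau> a = \<tau> b"
    then have "ys a * s2' (\<tau> a) = ys b * s2' (\<tau> a)" using \<tau>[OF a] \<tau>[OF b] by simp
    then have "ys a = ys b" using \<tau>[OF a] by simp
    then show "a = b" using inj_onD[OF ys_inj _ a b] by blast
  qed
  have "\<tau> ` {1..r} = {1..r}" using \<tau> inj by (intro endo_inj_surj) auto
  then have bij: "bij_betw \<tau> {1..r} {1..r}" using inj by (simp add: bij_betw_def)
  define \<sigma> where "\<sigma> = the_inv_into {1..r} \<tau>"
  have \<sigma>: "\<sigma> k \<in> {1..r}" "\<tau> (\<sigma> k) = k" if "k \<in> {1..r}" for k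
    using bij_betwE[OF bij_betw_the_inv_into[OF bij]] f_the_inv_into_f_bij_betw[OF bij] that
    unfolding \<sigma>_def by auto
  show thesis
  proof (rule that)
    show "bij_betw \<sigma> {1..r} {1..r}" unfolding \<sigma>_def by (rule bij_betw_the_inv_into[OF bij])
    show "s2' k \<noteq> 0 \<and> s1' k = ys (\<sigma> k) * s2' k" if "k \<in> {1..r}" for k
      using \<tau>[OF \<sigma>(1)[OF that]] \<sigma>(2)[OF that] by simp
  qed
qed

context
  fixes \<sigma> assumes \<sigma>: "bij_betw \<sigma> {1..r} {1..r}"
    and matching: "\<And>k. k \<in> {1..r} \<Longrightarrow> s2' k \<noteq> 0 \<and> s1' k = ys (\<sigma> k) * s2' k"
begin

lemma \<sigma>_in: "k \<in> {1..r} \<Longrightarrow> \<sigma> k \<in> {1..r}"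
  using bij_betwE[OF \<sigma>] by blast

lemma hom_eval_matched: "k \<in> {1..r} \<Longrightarrow> hom_eval d \<phi> (s1' k) (s2' k) = s2' k ^ d * hom_eval d \<phi> (ys (\<sigma> k)) 1"
  using matching[of k] hom_eval_scale[of d \<phi> "s2' k" "ys (\<sigma> k)" 1] by (simp add: mult.commute)

text \<open>The coefficients at the fixed forms agree: test with the form vanishing at all
  other fixed forms and at all free forms.\<close>

lemma fixed_coeff_agrees:
  assumes j0: "j0 \<in> {1..m}"
  shows "t' j0 = t j0"
proof -
  define P where "P = (\<lambda>j. (\<alpha> j, \<beta> j)) ` ({1..m} - {j0}) \<union> (\<lambda>k. (ys k, 1)) ` {1..r}"
  have "card P \<le> card ({1..m} - {j0}) + card {1..r}"
    unfolding P_def by (rule card_image_Un_le) auto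
  then have P: "finite P" "card P \<le> d" using j0 m_n unfolding P_def by auto
  note vanish = lin_prod_vanishes[OF P] and deg = lin_prod(2)[OF P]
  let ?V = "\<lambda>a b. hom_eval d (lin_prod P) a b"
  have new: "?V (ys k) 1 = 0" if "k \<in> {1..r}" for k
    using vanish that unfolding P_def by blast
  have fixed: "(\<Sum>j=1..m. u j * ?V (\<alpha> j) (\<beta> j)) = u j0 * ?V (\<alpha> j0) (\<beta> j0)" for u
  proof (rule sum_single_term[OF _ j0])
    fix j assume "j \<in> {1..m}" "j \<noteq> j0"
    then have "(\<alpha> j, \<beta> j) \<in> P" unfolding P_def by blast
    then show "u j * ?V (\<alpha> j) (\<beta> j) = 0" using vanish by simp
  qed simp
  have "rep_value d r \<alpha> \<beta> t' s1' s2' (lin_prod P) = t' j0 * ?V (\<alpha> j0) (\<beta> j0)"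
    unfolding rep_value_def m_def[symmetric] fixed using hom_eval_matched new \<sigma>_in by simp
  then have "t j0 * ?V (\<alpha> j0) (\<beta> j0) = t' j0 * ?V (\<alpha> j0) (\<beta> j0)"
    using pairing_agrees[OF deg] fixed new by simp
  moreover have "?V (\<alpha> j0) (\<beta> j0) \<noteq> 0"
  proof (rule lin_prod_nonzero[OF P])
    show "\<beta> j0 \<noteq> 0" using fixed_form_at[OF j0] by simp
    fix p q assume "(p, q) \<in> P"
    then consider j where "j \<in> {1..m}" "j \<noteq> j0" "(p, q) = (\<alpha> j, \<beta> j)"
      | k where "k \<in> {1..r}" "(p, q) = (ys k, 1)"
      unfolding P_def by blast
    then show "q * \<alpha> j0 - p * \<beta> j0 \<noteq> 0"
    proof cases
      case 1 then show ?thesis using fixed_forms_independent[OF j0] by simp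
    next
      case 2 then show ?thesis using fixed_new_independent[OF j0 ys_new] by simp
    qed
  qed
  ultimately show ?thesis by simp
qed

text \<open>The matched free forms have the same d-th power of their scale: test with the form
  vanishing at all fixed forms and all other free forms.\<close>

lemma scale_agrees:
  assumes k: "k \<in> {1..r}"
  shows "s2' k ^ d = \<mu> (\<sigma> k) ^ d"
proof -
  define P where "P = (\<lambda>j. (\<alpha> j, \<beta> j)) ` {1..m} \<union> (\<lambda>k'. (ys k', 1)) ` ({1..r} - {\<sigma> k})"
  have "card P \<le> card {1..m} + card ({1..r} - {\<sigma> k})"
    unfolding P_def by (rule card_image_Un_le) auto
  then have P: "finite P" "card P \<le> d" using \<sigma>_in[OF k] m_n unfolding P_def by auto
  note vanish = lin_prod_vanishes[OF P]
  let ?V = "\<lambda>a b. hom_eval d (lin_prod P) a b"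
  have "rep_value d r \<alpha> \<beta> t' s1' s2' (lin_prod P) = \<mu> (\<sigma> k) ^ d * ?V (ys (\<sigma> k)) 1"
    using P \<sigma>_in[OF k] by (intro pairing_single_free_point) (auto simp: P_def)
  moreover have "(\<Sum>k'=1..r. ?V (s1' k') (s2' k')) = s2' k ^ d * ?V (ys (\<sigma> k)) 1"
  proof (subst sum_single_term[OF _ k])
    fix k' assume k': "k' \<in> {1..r}" "k' \<noteq> k"
    then have "\<sigma> k' \<noteq> \<sigma> k" using bij_betw_imp_inj_on[OF \<sigma>] k by (auto dest: inj_onD)
    then show "?V (s1' k') (s2' k') = 0"
      using hom_eval_matched[OF k'(1)] vanish \<sigma>_in[OF k'(1)] unfolding P_def by auto
  qed (use hom_eval_matched[OF k] in simp_all)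
  moreover have "?V (\<alpha> j) (\<beta> j) = 0" if "j \<in> {1..m}" for j
    using vanish that unfolding P_def by blast
  moreover have "?V (ys (\<sigma> k)) 1 \<noteq> 0"
    using P \<sigma>_in[OF k] by (intro test_form_nonzero_at_free_point) (auto simp: P_def)
  ultimately show ?thesis unfolding rep_value_def m_def by simp
qed

end

lemma generic_rep_unique: "rep_equiv d r t (\<lambda>k. \<mu> k * ys k) \<mu> t' s1' s2'"
proof -
  obtain \<sigma> where \<sigma>: "bij_betw \<sigma> {1..r} {1..r}"
    and matching: "\<And>k. k \<in> {1..r} \<Longrightarrow> s2' k \<noteq> 0 \<and> s1' k = ys (\<sigma> k) * s2' k"
    using matching_permutation by blast
  define \<zeta> where "\<zeta> k = s2' k / \<mu> (\<sigma> k)" for k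
  have "\<zeta> k ^ d = 1 \<and> s1' k = \<zeta> k * (\<mu> (\<sigma> k) * ys (\<sigma> k)) \<and> s2' k = \<zeta> k * \<mu> (\<sigma> k)"
    if k: "k \<in> {1..r}" for k
    using scale_agrees[OF \<sigma> matching k] matching[OF k] \<mu>_nonzero[OF \<sigma>_in[OF \<sigma> matching k]]
    unfolding \<zeta>_def by (simp add: power_divide)
  then show ?thesis
    unfolding rep_equiv_def using fixed_coeff_agrees[OF \<sigma> matching] \<sigma> unfolding m_def by blast
qed

end

theorem general_unique_rep: "general_binform d (unique_waring_rep d r \<alpha> \<beta>)"
  unfolding general_binform_def
proof (intro bexI[of _ genericity] conjI allI impI)
  show "genericity \<in> polyfun (d + 1)" by (rule polyfun_genericity)
  show "\<exists>c. genericity c \<noteq> 0" by (rule genericity_nonzero)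
  fix c assume "genericity c \<noteq> 0"
  then obtain t \<mu> ys where gen: "generic_rep c t \<mu> ys" using generic_rep_exists by blast
  then show "unique_waring_rep d r \<alpha> \<beta> c"
    unfolding unique_waring_rep_def using generic_rep_unique[OF gen]
    by (auto simp: generic_rep_def)
qed

end

section \<open>Reduction to normal position by a shear\<close>

text \<open>The substitution x \<mapsto> x + kappa y acts linearly on coefficient vectors.  It maps
  representations for (alpha, beta) bijectively to representations for
  (alpha, alpha * kappa + beta), and for suitable kappa the latter is in normal position.\<close>

definition shear :: "nat \<Rightarrow> complex \<Rightarrow> (nat \<Rightarrow> complex) \<Rightarrow> nat \<Rightarrow> complex" where
  "shear d \<kappa> c i = (\<Sum>i'\<le>d. c i' * of_nat (i' choose i) * \<kappa> ^ (i' - i))"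

lemma binform_shear: "binform d (shear d \<kappa> c) x y = binform d c (x + \<kappa> * y) y"
proof -
  have "binform d c (x + \<kappa> * y) y
      = (\<Sum>i'\<le>d. \<Sum>i\<le>i'. c i' * of_nat (i' choose i) * \<kappa> ^ (i' - i) * x ^ i * (y ^ (i' - i) * y ^ (d - i')))"
    unfolding binform_def binomial_ring
    by (simp add: sum_distrib_left sum_distrib_right power_mult_distrib mult_ac)
  also have "\<dots> = (\<Sum>i'\<le>d. \<Sum>i\<le>d. c i' * of_nat (i' choose i) * \<kappa> ^ (i' - i) * (x ^ i * y ^ (d - i)))"
  proof (rule sum.cong[OF refl])
    fix i' assume i': "i' \<in> {..d}"
    have "y ^ (i' - i) * y ^ (d - i') = y ^ (d - i)" if "i \<le> i'" for i
      using that i' by (simp flip: power_add)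
    then show "(\<Sum>i\<le>i'. c i' * of_nat (i' choose i) * \<kappa> ^ (i' - i) * x ^ i * (y ^ (i' - i) * y ^ (d - i')))
        = (\<Sum>i\<le>d. c i' * of_nat (i' choose i) * \<kappa> ^ (i' - i) * (x ^ i * y ^ (d - i)))"
      using i' by (intro sum.mono_neutral_cong_left) auto
  qed
  also have "\<dots> = binform d (shear d \<kappa> c) x y"
    unfolding binform_def shear_def
    by (simp add: sum_distrib_left sum_distrib_right mult_ac) (rule sum.swap)
  finally show ?thesis by simp
qed

lemma polyfun_shear: "i < d + 1 \<Longrightarrow> (\<lambda>c. shear d \<kappa> c i) \<in> polyfun (d + 1)"
  unfolding shear_def by (intro polyfun_sum polyfun.mult polyfun.const polyfun.var) auto

lemma waring_rep_shear:
  assumes "\<And>x y. binform d c' x y = binform d c (x + \<kappa> * y) y"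
  shows "waring_rep d r \<alpha> \<beta> c t s1 s2 \<longleftrightarrow>
         waring_rep d r \<alpha> (\<lambda>j. \<alpha> j * \<kappa> + \<beta> j) c' t s1 (\<lambda>k. s2 k + \<kappa> * s1 k)"
proof -
  have sheared: "(\<Sum>j = 1..d + 1 - 2 * r. t j * (\<alpha> j * (x + \<kappa> * y) + \<beta> j * y) ^ d)
        + (\<Sum>k = 1..r. (s1 k * (x + \<kappa> * y) + s2 k * y) ^ d)
      = (\<Sum>j = 1..d + 1 - 2 * r. t j * (\<alpha> j * x + (\<alpha> j * \<kappa> + \<beta> j) * y) ^ d)
        + (\<Sum>k = 1..r. (s1 k * x + (s2 k + \<kappa> * s1 k) * y) ^ d)" for x y
    by (simp add: algebra_simps)
  show ?thesis
  proof
    assume "waring_rep d r \<alpha> \<beta> c t s1 s2"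
    then show "waring_rep d r \<alpha> (\<lambda>j. \<alpha> j * \<kappa> + \<beta> j) c' t s1 (\<lambda>k. s2 k + \<kappa> * s1 k)"
      unfolding waring_rep_def assms sheared[symmetric] by blast
  next
    assume rep: "waring_rep d r \<alpha> (\<lambda>j. \<alpha> j * \<kappa> + \<beta> j) c' t s1 (\<lambda>k. s2 k + \<kappa> * s1 k)"
    show "waring_rep d r \<alpha> \<beta> c t s1 s2"
      unfolding waring_rep_def
    proof (intro allI)
      fix x y
      have "binform d c x y = binform d c' (x - \<kappa> * y) y" using assms[of "x - \<kappa> * y" y] by simp
      also have "\<dots> = (\<Sum>j = 1..d + 1 - 2 * r. t j * (\<alpha> j * x + \<beta> j * y) ^ d)
          + (\<Sum>k = 1..r. (s1 k * x + s2 k * y) ^ d)"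
        using rep sheared[of "x - \<kappa> * y" y] unfolding waring_rep_def by simp
      finally show "binform d c x y = (\<Sum>j = 1..d + 1 - 2 * r. t j * (\<alpha> j * x + \<beta> j * y) ^ d)
          + (\<Sum>k = 1..r. (s1 k * x + s2 k * y) ^ d)" .
    qed
  qed
qed

lemma rep_equiv_shear:
  assumes "rep_equiv d r t s1 s2 t' s1' s2'"
  shows "rep_equiv d r t s1 (\<lambda>k. s2 k + \<kappa> * s1 k) t' s1' (\<lambda>k. s2' k + \<kappa> * s1' k)"
proof -
  obtain \<sigma> \<zeta> where t: "\<forall>j\<in>{1..d + 1 - 2 * r}. t' j = t j" and \<sigma>: "bij_betw \<sigma> {1..r} {1..r}"
    and \<zeta>: "\<forall>k\<in>{1..r}. \<zeta> k ^ d = 1 \<and> s1' k = \<zeta> k * s1 (\<sigma> k) \<and> s2' k = \<zeta> k * s2 (\<sigma> k)"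
    using assms unfolding rep_equiv_def by blast
  have "\<forall>k\<in>{1..r}. \<zeta> k ^ d = 1 \<and> s1' k = \<zeta> k * s1 (\<sigma> k)
          \<and> s2' k + \<kappa> * s1' k = \<zeta> k * (s2 (\<sigma> k) + \<kappa> * s1 (\<sigma> k))"
    using \<zeta> by (simp add: algebra_simps)
  then show ?thesis unfolding rep_equiv_def using t \<sigma> by blast
qed

lemma unique_waring_rep_shear:
  assumes shear: "\<And>x y. binform d c' x y = binform d c (x + \<kappa> * y) y"
    and "unique_waring_rep d r \<alpha> (\<lambda>j. \<alpha> j * \<kappa> + \<beta> j) c'"
  shows "unique_waring_rep d r \<alpha> \<beta> c"
proof -
  obtain t s1 s2 where rep: "waring_rep d r \<alpha> (\<lambda>j. \<alpha> j * \<kappa> + \<beta> j) c' t s1 s2"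
    and unique: "\<And>t' s1' s2'. waring_rep d r \<alpha> (\<lambda>j. \<alpha> j * \<kappa> + \<beta> j) c' t' s1' s2'
                   \<Longrightarrow> rep_equiv d r t s1 s2 t' s1' s2'"
    using assms(2) unfolding unique_waring_rep_def by blast
  let ?s2 = "\<lambda>k. s2 k - \<kappa> * s1 k"
  have "waring_rep d r \<alpha> \<beta> c t s1 ?s2" using rep by (simp add: waring_rep_shear[OF shear])
  moreover have "rep_equiv d r t s1 ?s2 t' s1' s2'" if "waring_rep d r \<alpha> \<beta> c t' s1' s2'" for t' s1' s2'
    using rep_equiv_shear[OF unique, of t' s1' "\<lambda>k. s2' k + \<kappa> * s1' k" "- \<kappa>"] that
    by (simp add: waring_rep_shear[OF shear])
  ultimately show ?thesis unfolding unique_waring_rep_def by blast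
qed

text \<open>The Zariski open set pulls back along the (invertible) shear.\<close>

lemma general_binform_shear:
  assumes "general_binform d (unique_waring_rep d r \<alpha> (\<lambda>j. \<alpha> j * \<kappa> + \<beta> j))"
  shows "general_binform d (unique_waring_rep d r \<alpha> \<beta>)"
proof -
  obtain F' where F': "F' \<in> polyfun (d + 1)" "\<exists>c. F' c \<noteq> 0"
    and P': "\<And>c. F' c \<noteq> 0 \<Longrightarrow> unique_waring_rep d r \<alpha> (\<lambda>j. \<alpha> j * \<kappa> + \<beta> j) c"
    using assms unfolding general_binform_def by blast
  obtain c0' where c0': "F' c0' \<noteq> 0" using F'(2) by blast
  define F where "F c = F' (shear d \<kappa> c)" for c
  have F: "F \<in> polyfun (d + 1)" unfolding F_def by (rule polyfun_compose[OF F'(1) polyfun_shear])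
  have "binform d (shear d \<kappa> (shear d (- \<kappa>) c0')) x y = binform d c0' x y" for x y
    by (simp add: binform_shear)
  then have "shear d \<kappa> (shear d (- \<kappa>) c0') i = c0' i" if "i < d + 1" for i
    using binform_eq_iff that by (metis less_Suc_eq_le Suc_eq_plus1)
  then have "F (shear d (- \<kappa>) c0') \<noteq> 0"
    unfolding F_def using polyfun_cong[OF F'(1)] c0' by metis
  moreover have "unique_waring_rep d r \<alpha> \<beta> c" if "F c \<noteq> 0" for c
    using unique_waring_rep_shear[OF binform_shear P'] that unfolding F_def by blast
  ultimately show ?thesis unfolding general_binform_def using F by blast
qed

text \<open>A shear avoiding the finitely many bad values kappa = - beta_j / alpha_j puts
  pairwise non-proportional nonzero forms into normal position.\<close>

lemma shear_to_normal_position: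
  assumes "d \<ge> 1" and "2 * r \<le> d + 1"
    and nonzero: "\<forall>j\<in>{1..d + 1 - 2 * r}. (\<alpha> j, \<beta> j) \<noteq> (0, 0)"
    and independent: "\<forall>i\<in>{1..d + 1 - 2 * r}. \<forall>j\<in>{1..d + 1 - 2 * r}.
           i \<noteq> j \<longrightarrow> \<not> proportional (\<alpha> i, \<beta> i) (\<alpha> j, \<beta> j)"
  obtains \<kappa> where "normal_position d r \<alpha> (\<lambda>j. \<alpha> j * \<kappa> + \<beta> j)"
proof -
  let ?J = "{1..d + 1 - 2 * r}"
  obtain \<kappa> :: complex where \<kappa>: "\<kappa> \<notin> (\<lambda>j. - \<beta> j / \<alpha> j) ` ?J"
    using ex_new_if_finite[OF infinite_UNIV_char_0] by blast
  have \<beta>': "\<alpha> j * \<kappa> + \<beta> j \<noteq> 0" if j: "j \<in> ?J" for j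
  proof
    assume e: "\<alpha> j * \<kappa> + \<beta> j = 0"
    show False
    proof (cases "\<alpha> j = 0")
      case True then show False using e nonzero j by auto
    next
      case False
      then have "\<kappa> = - \<beta> j / \<alpha> j" using e by (simp add: field_simps add_eq_0_iff)
      then show False using \<kappa> j by auto
    qed
  qed
  have "inj_on (\<lambda>j. \<alpha> j / (\<alpha> j * \<kappa> + \<beta> j)) ?J"
  proof (rule inj_onI, rule ccontr)
    fix i j assume i: "i \<in> ?J" and j: "j \<in> ?J" and ij: "i \<noteq> j"
      and "\<alpha> i / (\<alpha> i * \<kappa> + \<beta> i) = \<alpha> j / (\<alpha> j * \<kappa> + \<beta> j)"
    then have cross: "\<alpha> i * \<beta> j = \<alpha> j * \<beta> i" using \<beta>'[OF i] \<beta>'[OF j] by (simp add: field_simps)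
    have "proportional (\<alpha> i, \<beta> i) (\<alpha> j, \<beta> j)"
    proof (cases "\<alpha> j = 0")
      case True
      then have "\<beta> j \<noteq> 0" "\<alpha> i = 0" using nonzero j cross by auto
      then show ?thesis unfolding proportional_def using True by (intro disjI1 exI[of _ "\<beta> i / \<beta> j"]) simp
    next
      case False
      then show ?thesis unfolding proportional_def using cross
        by (intro disjI1 exI[of _ "\<alpha> i / \<alpha> j"]) (simp add: field_simps)
    qed
    then show False using independent i j ij by blast
  qed
  then have "normal_position d r \<alpha> (\<lambda>j. \<alpha> j * \<kappa> + \<beta> j)"
    using assms(1,2) \<beta>' by unfold_locales auto
  then show ?thesis by (rule that)
qed

theorem corollary4p1:
  fixes d r :: nat and \<alpha> \<beta> :: "nat \<Rightarrow> complex"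
  assumes "d \<ge> 1" and "2 * r \<le> d + 1"
    and "\<forall>j\<in>{1..d + 1 - 2 * r}. (\<alpha> j, \<beta> j) \<noteq> (0, 0)"
    and "\<forall>i\<in>{1..d + 1 - 2 * r}. \<forall>j\<in>{1..d + 1 - 2 * r}.
           i \<noteq> j \<longrightarrow> \<not> proportional (\<alpha> i, \<beta> i) (\<alpha> j, \<beta> j)"
  shows "general_binform d (\<lambda>c.
           \<exists>t s1 s2. waring_rep d r \<alpha> \<beta> c t s1 s2 \<and>
             (\<forall>t' s1' s2'. waring_rep d r \<alpha> \<beta> c t' s1' s2' \<longrightarrow>
                (\<forall>j\<in>{1..d + 1 - 2 * r}. t' j = t j) \<and>
                (\<exists>\<sigma> \<zeta>. bij_betw \<sigma> {1..r} {1..r} \<and>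
                   (\<forall>k\<in>{1..r}. \<zeta> k ^ d = 1 \<and>
                      s1' k = \<zeta> k * s1 (\<sigma> k) \<and> s2' k = \<zeta> k * s2 (\<sigma> k)))))"
proof -
  obtain \<kappa> where "normal_position d r \<alpha> (\<lambda>j. \<alpha> j * \<kappa> + \<beta> j)"
    using shear_to_normal_position[OF assms] .
  then have "general_binform d (unique_waring_rep d r \<alpha> (\<lambda>j. \<alpha> j * \<kappa> + \<beta> j))"
    by (rule normal_position.general_unique_rep)
  then have "general_binform d (unique_waring_rep d r \<alpha> \<beta>)" by (rule general_binform_shear)
  then show ?thesis unfolding unique_waring_rep_def[abs_def] rep_equiv_def .
qed

end
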